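(* For every $\beta>0$ and every $L,M\geq 1$, \begin{equation*} \frac{Z^{+,-}_{\mathcal{R}(L,M),\beta}}{Z^{+,+}_{\mathcal{R}(L,M),\beta}}= \Psi^{0}_{\mathcal R(L,M),\beta,\mathsf{h}^{+,+}_{L,M}}\big[\text{$\mathfrak g^{-}$ is not connected to $\mathfrak g^{+}$ in $\omega$}\big]. \end{equation*} In particular, the surface tension $\tau_{\beta}:=\liminf_{L\to\infty}\liminf_{M\to\infty}\frac{1}{L^{d-1}}\log \frac{Z^{+,+}_{\mathcal{R}(L,M),\beta}}{Z^{+,-}_{\mathcal{R}(L,M),\beta}}$ satisfies $\tau_{\beta}\geq 0$ for every $\beta>0$.
   Context: Fix $g>0$, $a\in\mathbb R$, and let $\mathrm d\rho_{g,a}(t)\propto e^{-gt^4-at^2}\mathrm dt$ on $\mathbb R$. For a finite $\Lambda\subset\mathbb Z^d$ ($d\geq2$) with nearest-neighbour edge set $E(\Lambda)$ and a field $\mathsf h\in\mathbb R^\Lambda$, the $\varphi^4$ partition function is $Z^{\varphi^4}_{\Lambda,\beta,\mathsf h}=\int \exp\big(\beta\sum_{xy\in E(\Lambda)}\varphi_x\varphi_y+\beta\sum_{x\in\Lambda}\mathsf h_x\varphi_x\big)\prod_{x\in\Lambda}\mathrm d\rho_{g,a}(\varphi_x)$. For $L,M\geq1$ let $\mathcal R(L,M)=\{-L,\dots,L\}^{d-1}\times\{-M,\dots,M\}$, its thick boundary $\partial^{\rm thick}\mathcal R(L,M)=\mathcal R(L,M)\setminus\big(\{-L+\log L+1,\dots,L-\log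 L-1\}^{d-1}\times\{-M,\dots,M\}\big)$, its top part $\partial^{\rm thick}_+=\partial^{\rm thick}\mathcal R(L,M)\cap\{x_d\in\{1,\dots,M\}\}$ and bottom part $\partial^{\rm thick}_-=\partial^{\rm thick}\mathcal R(L,M)\cap\{x_d\in\{-M,\dots,0\}\}$. Let $\mathsf h^{+,+}_{L,M}=\mathbbm 1_{\partial^{\rm thick}\mathcal R(L,M)}$ and $\mathsf h^{+,-}_{L,M}=\mathbbm 1_{\partial^{\rm thick}_+}-\mathbbm 1_{\partial^{\rm thick}_-}$, and $Z^{+,\pm}_{\mathcal R(L,M),\beta}:=Z^{\varphi^4}_{\mathcal R(L,M),\beta,\mathsf h^{+,\pm}_{L,M}}$. Let $\mathcal R^{+,-}(L,M)$ be the graph with vertices $\mathcal R(L,M)\cup\{\mathfrak g^+,\mathfrak g^-\}$ (two ghost vertices) and edges $E(\mathcal R(L,M))\cup\{x\mathfrak g^+:x\in\partial^{\rm thick}_+\}\cup\{x\mathfrak g^-:x\in\partial^{\rm thick}_-\}$. The free $\varphi^4$ random cluster measure $\Psi^{0}_{\mathcal R(L,M),\beta,\mathsf{h}^{+,+}_{L,M}}$ is the probability measure on pairs $(\omega,\mathsf a)\in\{0,1\}^{E(\mathcal R^{+,-}(L,M))}\times(\mathbb R^+)^{\mathcal R(L,M)}$ with density proportional to $\prod_{xy\in E(\mathcal R(L,M))}\sqrt{1-p_{xy}}\big(\tfrac{p_{xy}}{1-p_{xy}}\big)^{\omega_{xy}}\prod_{x\mathfrak g^{\pm}}\sqrt{1-p_{x\mathfrak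 g}}\big(\tfrac{p_{x\mathfrak g}}{1-p_{x\mathfrak g}}\big)^{\omega_{x\mathfrak g^\pm}}\,2^{\tilde k(\omega)}\prod_{x}\mathrm d\rho_{g,a}(\mathsf a_x)$, where $\mathrm d\rho_{g,a}(\mathsf a_x)$ here denotes the pushforward of $\rho_{g,a}$ under $t\mapsto|t|$, $p_{xy}=1-e^{-2\beta\mathsf a_x\mathsf a_y}$, $p_{x\mathfrak g}=1-e^{-2\beta\mathsf h^{+,+}_{L,M}(x)\mathsf a_x}$, and $\tilde k(\omega)$ is the number of connected components of $\omega$ after identifying $\mathfrak g^+$ and $\mathfrak g^-$. (After identifying the two ghosts this is the usual free $\varphi^4$ random cluster measure with field $\mathsf h^{+,+}_{L,M}$, i.e. an Ising random cluster model with couplings $\beta\mathsf a_x\mathsf a_y$ in the random environment $\mathsf a\sim|\varphi|$.) *)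

theory Defs
  imports "HOL-Analysis.Analysis"
begin

text \<open>Points of Z^d are functions nat => int vanishing outside coordinates 0..d-1;
  the paper's coordinate x_d is coordinate d-1 here.\<close>

definition box :: "nat \<Rightarrow> nat \<Rightarrow> nat \<Rightarrow> (nat \<Rightarrow> int) set" where
  "box d L M = {x. (\<forall>i<d-1. - int L \<le> x i \<and> x i \<le> int L)
                  \<and> - int M \<le> x (d-1) \<and> x (d-1) \<le> int M \<and> (\<forall>i\<ge>d. x i = 0)}"

definition nn_edges :: "nat \<Rightarrow> (nat \<Rightarrow> int) set \<Rightarrow> (nat \<Rightarrow> int) set set" where
  "nn_edges d \<Lambda> = {{x, y} | x y. x \<in> \<Lambda> \<and> y \<in> \<Lambda> \<and> (\<Sum>i<d. \<bar>x i - y i\<bar>) = 1}"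

definition thick_bdry :: "nat \<Rightarrow> nat \<Rightarrow> nat \<Rightarrow> (nat \<Rightarrow> int) set" where
  "thick_bdry d L M = box d L M - {x. \<forall>i<d-1.
       - real L + ln (real L) + 1 \<le> real_of_int (x i) \<and> real_of_int (x i) \<le> real L - ln (real L) - 1}"

definition thick_top :: "nat \<Rightarrow> nat \<Rightarrow> nat \<Rightarrow> (nat \<Rightarrow> int) set" where
  "thick_top d L M = thick_bdry d L M \<inter> {x. 1 \<le> x (d-1) \<and> x (d-1) \<le> int M}"

definition thick_bot :: "nat \<Rightarrow> nat \<Rightarrow> nat \<Rightarrow> (nat \<Rightarrow> int) set" where
  "thick_bot d L M = thick_bdry d L M \<inter> {x. - int M \<le> x (d-1) \<and> x (d-1) \<le> 0}"

definition h_pp :: "nat \<Rightarrow> nat \<Rightarrow> nat \<Rightarrow> (nat \<Rightarrow> int) \<Rightarrow> real" where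
  "h_pp d L M x = (if x \<in> thick_bdry d L M then 1 else 0)"

definition h_pm :: "nat \<Rightarrow> nat \<Rightarrow> nat \<Rightarrow> (nat \<Rightarrow> int) \<Rightarrow> real" where
  "h_pm d L M x = (if x \<in> thick_top d L M then 1 else 0) - (if x \<in> thick_bot d L M then 1 else 0)"

definition rho :: "real \<Rightarrow> real \<Rightarrow> real measure" where
  "rho g a = density lborel (\<lambda>t. ennreal (exp (- g * t ^ 4 - a * t ^ 2) /
       (\<integral>s. exp (- g * s ^ 4 - a * s ^ 2) \<partial>lborel)))"

definition Z_phi4 :: "nat \<Rightarrow> real \<Rightarrow> real \<Rightarrow> (nat \<Rightarrow> int) set \<Rightarrow> real
    \<Rightarrow> ((nat \<Rightarrow> int) \<Rightarrow> real) \<Rightarrow> real" where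
  "Z_phi4 d g a \<Lambda> \<beta> h =
     (\<integral>\<phi>. exp (\<beta> * (\<Sum>e\<in>nn_edges d \<Lambda>. \<Prod>v\<in>e. \<phi> v) + \<beta> * (\<Sum>x\<in>\<Lambda>. h x * \<phi> x))
        \<partial>(PiM \<Lambda> (\<lambda>_. rho g a)))"

definition Z_pp :: "nat \<Rightarrow> real \<Rightarrow> real \<Rightarrow> nat \<Rightarrow> nat \<Rightarrow> real \<Rightarrow> real" where
  "Z_pp d g a L M \<beta> = Z_phi4 d g a (box d L M) \<beta> (h_pp d L M)"

definition Z_pm :: "nat \<Rightarrow> real \<Rightarrow> real \<Rightarrow> nat \<Rightarrow> nat \<Rightarrow> real \<Rightarrow> real" where
  "Z_pm d g a L M \<beta> = Z_phi4 d g a (box d L M) \<beta> (h_pm d L M)"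

datatype vtx = V "nat \<Rightarrow> int" | Gp | Gm

definition ghost_edges :: "nat \<Rightarrow> nat \<Rightarrow> nat \<Rightarrow> vtx set set" where
  "ghost_edges d L M = (\<lambda>e. V ` e) ` nn_edges d (box d L M)
      \<union> (\<lambda>x. {V x, Gp}) ` thick_top d L M \<union> (\<lambda>x. {V x, Gm}) ` thick_bot d L M"

definition merge_g :: "vtx \<Rightarrow> vtx" where
  "merge_g v = (if v = Gm then Gp else v)"

definition merged_rel :: "vtx set set \<Rightarrow> (vtx \<times> vtx) set" where
  "merged_rel \<omega> = {(merge_g u, merge_g v) | u v. {u, v} \<in> \<omega>}"

text \<open>Number of connected components of omega after identifying the two ghosts.\<close>
definition k_tilde :: "nat \<Rightarrow> nat \<Rightarrow> nat \<Rightarrow> vtx set set \<Rightarrow> nat" where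
  "k_tilde d L M \<omega> = card ((V ` box d L M \<union> {Gp}) // ((merged_rel \<omega>)\<^sup>*))"

definition open_rel :: "vtx set set \<Rightarrow> (vtx \<times> vtx) set" where
  "open_rel \<omega> = {(u, v). {u, v} \<in> \<omega>}"

definition ghosts_connected :: "vtx set set \<Rightarrow> bool" where
  "ghosts_connected \<omega> \<longleftrightarrow> (Gm, Gp) \<in> (open_rel \<omega>)\<^sup>*"

definition edge_factor :: "real \<Rightarrow> bool \<Rightarrow> real" where
  "edge_factor p b = sqrt (1 - p) * (if b then p / (1 - p) else 1)"

definition rc_weight :: "nat \<Rightarrow> nat \<Rightarrow> nat \<Rightarrow> real
     \<Rightarrow> vtx set set \<Rightarrow> ((nat \<Rightarrow> int) \<Rightarrow> real) \<Rightarrow> real" where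
  "rc_weight d L M \<beta> \<omega> aa =
     (\<Prod>e\<in>nn_edges d (box d L M).
         edge_factor (1 - exp (- 2 * \<beta> * (\<Prod>v\<in>e. aa v))) (V ` e \<in> \<omega>))
   * (\<Prod>x\<in>thick_top d L M.
         edge_factor (1 - exp (- 2 * \<beta> * h_pp d L M x * aa x)) ({V x, Gp} \<in> \<omega>))
   * (\<Prod>x\<in>thick_bot d L M.
         edge_factor (1 - exp (- 2 * \<beta> * h_pp d L M x * aa x)) ({V x, Gm} \<in> \<omega>))
   * 2 ^ k_tilde d L M \<omega>"

definition rc_base :: "nat \<Rightarrow> real \<Rightarrow> real \<Rightarrow> nat \<Rightarrow> nat
     \<Rightarrow> (vtx set set \<times> ((nat \<Rightarrow> int) \<Rightarrow> real)) measure" where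
  "rc_base d g a L M = count_space (Pow (ghost_edges d L M))
      \<Otimes>\<^sub>M PiM (box d L M) (\<lambda>_. distr (rho g a) borel abs)"

definition Psi0 :: "nat \<Rightarrow> real \<Rightarrow> real \<Rightarrow> nat \<Rightarrow> nat \<Rightarrow> real
     \<Rightarrow> (vtx set set \<times> ((nat \<Rightarrow> int) \<Rightarrow> real)) measure" where
  "Psi0 d g a L M \<beta> = density (rc_base d g a L M)
     (\<lambda>(\<omega>, aa). ennreal (rc_weight d L M \<beta> \<omega> aa /
        (\<integral>(\<omega>', aa'). rc_weight d L M \<beta> \<omega>' aa' \<partial>(rc_base d g a L M))))"

definition surface_tension :: "nat \<Rightarrow> real \<Rightarrow> real \<Rightarrow> real \<Rightarrow> ereal" where
  "surface_tension d g a \<beta> = liminf (\<lambda>L. liminf (\<lambda>M.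
      ereal (1 / real L ^ (d - 1) * ln (Z_pp d g a L M \<beta> / Z_pm d g a L M \<beta>))))"

end

theory Submission
  imports Defs "HOL-Probability.Probability"
begin

text \<open>
  Write \<open>\<phi> = \<sigma> \<bar>\<phi>\<bar>\<close> with signs \<open>\<sigma> \<in> {-1, 1}\<^sup>\<Lambda>\<close>. Since the single-site measure is
  symmetric, averaging over the signs turns each partition function into an integral, over the
  moduli \<open>a = \<bar>\<phi>\<bar>\<close>, of an Ising partition function with couplings \<open>\<beta> a\<^sub>x a\<^sub>y\<close>, in which
  the boundary field becomes a coupling to a ghost vertex: \<open>g\<^sup>+\<close> carries spin \<open>+1\<close>, and
  \<open>g\<^sup>-\<close> carries spin \<open>+1\<close> or \<open>-1\<close> for the boundary conditions \<open>(+,+)\<close> and \<open>(+,-)\<close>.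
  The Edwards--Sokal expansion \<open>exp (\<beta> J s t) = \<surd>(1 - p) (1 + [s = t] p / (1 - p))\<close>, where
  \<open>p = 1 - exp (-2 \<beta> J)\<close>, writes the spin sum as a sum over bond configurations \<open>\<omega>\<close> of a
  bond weight times the number of spin configurations that are constant on the clusters of \<open>\<omega>\<close>.
  With both ghosts at \<open>+1\<close> this number is \<open>2\<^bsup>k(\<omega>) - 1\<^esup>\<close>, \<open>k\<close> counting clusters after
  identifying the ghosts. With \<open>g\<^sup>-\<close> at \<open>-1\<close> it vanishes if \<open>\<omega>\<close> connects the ghosts, and
  otherwise it is the same number, as one sees by flipping the cluster of \<open>g\<^sup>-\<close>. So both partition
  functions are integrals of random cluster weights against the same reference measure as
  \<open>\<Psi>\<^sup>0\<close>, and their ratio is the \<open>\<Psi>\<^sup>0\<close>-probability that the ghosts are not connected. This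
  ratio is at most 1, so the logarithm in the surface tension is nonnegative.
\<close>

lemma neg_quartic_le_neg_square:
  fixes g a t :: real
  assumes "g > 0"
  shows "- g * t ^ 4 - a * t ^ 2 \<le> (1/2 - a)^2 / (4*g) - t^2/2"
proof -
  have "0 \<le> (2*g*t^2 - (1/2 - a))^2 / (4*g)" using assms by simp
  also have "\<dots> = g * t^4 - (1/2 - a) * t^2 + (1/2 - a)^2/(4*g)"
    using assms by (simp add: field_simps power2_eq_square power4_eq_xxxx)
  finally show ?thesis by (simp add: algebra_simps)
qed

lemma integrable_exp_neg_quartic:
  fixes g a :: real
  assumes "g > 0"
  shows "integrable lborel (\<lambda>t. exp (- g * t ^ 4 - a * t ^ 2))"
proof (rule Bochner_Integration.integrable_bound)
  define K where "K = exp ((1/2 - a)^2 / (4*g)) * sqrt (2*pi)"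
  show "integrable lborel (\<lambda>t. K * normal_density 0 1 t)" by simp
  show "AE t in lborel. norm (exp (- g * t ^ 4 - a * t ^ 2)) \<le> norm (K * normal_density 0 1 t)"
  proof (rule AE_I2)
    fix t :: real
    have "exp (- g * t ^ 4 - a * t ^ 2) \<le> exp ((1/2 - a)^2 / (4*g) - t^2/2)"
      using neg_quartic_le_neg_square[OF assms] by simp
    also have "\<dots> = K * normal_density 0 1 t"
      by (simp add: K_def normal_density_def exp_add[symmetric])
    finally show "norm (exp (- g * t ^ 4 - a * t ^ 2)) \<le> norm (K * normal_density 0 1 t)"
      by (simp add: K_def)
  qed
qed simp

lemma sets_rho [simp, measurable_cong]: "sets (rho g a) = sets borel"
  by (simp add: rho_def)

lemma space_rho [simp]: "space (rho g a) = UNIV"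
  by (simp add: rho_def)

lemma prob_space_rho:
  assumes "g > 0"
  shows "prob_space (rho g a)"
proof (rule prob_spaceI)
  let ?f = "\<lambda>t::real. exp (- g * t ^ 4 - a * t ^ 2)"
  define c where "c = (\<integral>s. ?f s \<partial>lborel)"
  have int: "integrable lborel ?f"
    by (rule integrable_exp_neg_quartic[OF assms])
  have "c \<noteq> 0"
  proof
    assume "c = 0"
    then have "AE t in lborel. ?f t = 0"
      using integral_nonneg_eq_0_iff_AE[OF int] by (simp add: c_def)
    then show False
      by (simp add: trivial_limit_def[symmetric] ae_filter_eq_bot_iff)
  qed
  moreover have "c \<ge> 0"
    unfolding c_def by (rule integral_nonneg_AE) simp
  ultimately have "c > 0" by simp
  have "emeasure (rho g a) (space (rho g a)) = (\<integral>\<^sup>+ t. ennreal (?f t / c) \<partial>lborel)"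
    unfolding rho_def c_def[symmetric] by (simp add: emeasure_density)
  also have "\<dots> = ennreal (\<integral>t. ?f t / c \<partial>lborel)"
    using int \<open>c > 0\<close> by (intro nn_integral_eq_integral) auto
  also have "(\<integral>t. ?f t / c \<partial>lborel) = 1"
    using \<open>c > 0\<close> by (simp add: c_def)
  finally show "emeasure (rho g a) (space (rho g a)) = 1" by simp
qed

lemma distr_rho_uminus: "distr (rho g a) borel uminus = rho g a"
proof -
  let ?f = "\<lambda>t::real. ennreal (exp (- g * t ^ 4 - a * t ^ 2) /
       (\<integral>s. exp (- g * s ^ 4 - a * s ^ 2) \<partial>lborel))"
  have "density (distr lborel borel uminus) ?f = distr (density lborel (\<lambda>t. ?f (- t))) borel uminus"
    by (rule density_distr) auto
  then show ?thesis
    unfolding rho_def lborel_distr_uminus by simp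
qed

text \<open>Off \<open>I\<close> the coordinate is constantly \<open>undefined\<close> on the space of the product, so no
  membership side condition arises.\<close>

lemma measurable_PiM_component_real [measurable]:
  assumes "sets N = sets (borel :: real measure)"
  shows "(\<lambda>\<phi>. \<phi> v) \<in> borel_measurable (PiM I (\<lambda>_. N))"
proof (cases "v \<in> I")
  case True
  then show ?thesis
    using measurable_component_singleton[OF True, of "\<lambda>_. N"] measurable_cong_sets[OF refl assms]
    by blast
next
  case False
  then have "\<phi> v = undefined" if "\<phi> \<in> space (PiM I (\<lambda>_. N))" for \<phi>
    using that by (auto simp: space_PiM PiE_def extensional_def)
  then show ?thesis
    by (subst measurable_cong[where g = "\<lambda>_. undefined"]) auto
qed

section \<open>Averaging over signs\<close>

text \<open>A variant of \<open>distr_PiM_finite_prob_space\<close> in which the map may depend on the coordinate.\<close>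

lemma distr_PiM_coordinatewise:
  assumes fin: "finite I" and "prob_space \<mu>"
    and f [measurable]: "\<And>i. i \<in> I \<Longrightarrow> f i \<in> \<mu> \<rightarrow>\<^sub>M \<mu>"
  shows "distr (PiM I (\<lambda>_. \<mu>)) (PiM I (\<lambda>_. \<mu>)) (\<lambda>x. \<lambda>i\<in>I. f i (x i))
       = PiM I (\<lambda>i. distr \<mu> \<mu> (f i))"
proof -
  interpret M: product_prob_space "\<lambda>_. \<mu>"
    by (intro product_prob_spaceI) fact
  define N where "N = (\<lambda>i. if i \<in> I then distr \<mu> \<mu> (f i) else \<mu>)"
  interpret N: product_prob_space N
    by (intro product_prob_spaceI) (auto simp: N_def intro!: prob_space.prob_space_distr \<open>prob_space \<mu>\<close>)
  let ?F = "\<lambda>x. \<lambda>i\<in>I. f i (x i)"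
  have meas_F: "?F \<in> PiM I (\<lambda>_. \<mu>) \<rightarrow>\<^sub>M PiM I (\<lambda>_. \<mu>)"
  proof (rule measurable_restrict)
    fix i assume "i \<in> I"
    then show "(\<lambda>x. f i (x i)) \<in> PiM I (\<lambda>_. \<mu>) \<rightarrow>\<^sub>M \<mu>" by measurable
  qed
  have "distr (PiM I (\<lambda>_. \<mu>)) (PiM I (\<lambda>_. \<mu>)) ?F = PiM I N"
  proof (rule N.PiM_eqI)
    show "sets (distr (PiM I (\<lambda>_. \<mu>)) (PiM I (\<lambda>_. \<mu>)) ?F) = sets (Pi\<^sub>M I N)"
      unfolding N_def by (simp cong: sets_PiM_cong)
    fix A assume A: "\<And>i. i \<in> I \<Longrightarrow> A i \<in> sets (N i)"
    then have A': "\<And>i. i \<in> I \<Longrightarrow> A i \<in> sets \<mu>" by (simp add: N_def)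
    have "?F -` Pi\<^sub>E I A \<inter> space (Pi\<^sub>M I (\<lambda>_. \<mu>)) = Pi\<^sub>E I (\<lambda>i. f i -` A i \<inter> space \<mu>)"
      by (auto simp: space_PiM PiE_def Pi_def extensional_def)
    then have "emeasure (distr (PiM I (\<lambda>_. \<mu>)) (PiM I (\<lambda>_. \<mu>)) ?F) (Pi\<^sub>E I A)
        = emeasure (Pi\<^sub>M I (\<lambda>_. \<mu>)) (Pi\<^sub>E I (\<lambda>i. f i -` A i \<inter> space \<mu>))"
      using A' by (simp add: emeasure_distr[OF meas_F] sets_PiM_I_finite fin)
    also have "\<dots> = (\<Prod>i\<in>I. emeasure \<mu> (f i -` A i \<inter> space \<mu>))"
      using A' by (intro M.emeasure_PiM fin) (auto intro: measurable_sets)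
    also have "\<dots> = (\<Prod>i\<in>I. emeasure (N i) (A i))"
      using A' by (intro prod.cong) (auto simp: N_def emeasure_distr)
    finally show "emeasure (distr (PiM I (\<lambda>_. \<mu>)) (PiM I (\<lambda>_. \<mu>)) ?F) (Pi\<^sub>E I A) = \<dots>" .
  qed (rule fin)
  also have "PiM I N = PiM I (\<lambda>i. distr \<mu> \<mu> (f i))"
    by (intro PiM_cong) (auto simp: N_def)
  finally show ?thesis .
qed

lemma distr_PiM_sign_flip:
  fixes \<mu> :: "real measure"
  assumes "finite I" and "prob_space \<mu>" and sets: "sets \<mu> = sets borel"
    and sym: "distr \<mu> borel uminus = \<mu>" and \<tau>: "\<tau> \<in> I \<rightarrow>\<^sub>E {-1, 1}"
  shows "distr (PiM I (\<lambda>_. \<mu>)) (PiM I (\<lambda>_. \<mu>)) (\<lambda>x. \<lambda>i\<in>I. \<tau> i * x i) = PiM I (\<lambda>_. \<mu>)"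
proof -
  have "distr \<mu> \<mu> (\<lambda>t. \<tau> i * t) = \<mu>" if "i \<in> I" for i
  proof (cases "\<tau> i = 1")
    case True
    then show ?thesis by (simp add: distr_id)
  next
    case False
    with \<tau> that have "\<tau> i = -1" by auto
    then have "distr \<mu> \<mu> (\<lambda>t. \<tau> i * t) = distr \<mu> borel uminus"
      using sets by (intro distr_cong) auto
    then show ?thesis using sym by simp
  qed
  moreover have "(\<lambda>t. \<tau> i * t) \<in> \<mu> \<rightarrow>\<^sub>M \<mu>" for i
    using sets by (simp add: measurable_cong_sets[OF sets sets])
  ultimately show ?thesis
    using distr_PiM_coordinatewise[of I \<mu> "\<lambda>i t. \<tau> i * t"] assms(1,2) by (simp cong: PiM_cong)
qed

lemma nn_integral_PiM_sign_average:
  fixes \<mu> :: "real measure"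
  assumes fin: "finite I" and "prob_space \<mu>" and sets [measurable_cong]: "sets \<mu> = sets borel"
    and "distr \<mu> borel uminus = \<mu>" and G [measurable]: "G \<in> borel_measurable (PiM I (\<lambda>_. \<mu>))"
  shows "(\<integral>\<^sup>+\<phi>. G \<phi> \<partial>PiM I (\<lambda>_. \<mu>)) * 2 ^ card I
       = (\<integral>\<^sup>+\<phi>. (\<Sum>\<sigma>\<in>I \<rightarrow>\<^sub>E {-1, 1}. G (\<lambda>x\<in>I. \<sigma> x * \<bar>\<phi> x\<bar>)) \<partial>PiM I (\<lambda>_. \<mu>))"
proof -
  let ?P = "PiM I (\<lambda>_. \<mu>)"
  let ?S = "I \<rightarrow>\<^sub>E {-1, 1::real}"
  have flip_invariant: "integral\<^sup>N ?P G = (\<integral>\<^sup>+\<phi>. G (\<lambda>x\<in>I. \<tau> x * \<phi> x) \<partial>?P)" if "\<tau> \<in> ?S" for \<tau>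
    using nn_integral_distr[of "\<lambda>\<phi>. \<lambda>x\<in>I. \<tau> x * \<phi> x" ?P ?P G]
      distr_PiM_sign_flip[OF assms(1-4) that] by simp
  have "integral\<^sup>N ?P G * 2 ^ card I = (\<Sum>\<tau>\<in>?S. integral\<^sup>N ?P G)"
    using fin by (simp add: card_PiE mult.commute)
  also have "\<dots> = (\<Sum>\<tau>\<in>?S. \<integral>\<^sup>+\<phi>. G (\<lambda>x\<in>I. \<tau> x * \<phi> x) \<partial>?P)"
    by (rule sum.cong) (simp_all add: flip_invariant)
  also have "\<dots> = (\<integral>\<^sup>+\<phi>. (\<Sum>\<tau>\<in>?S. G (\<lambda>x\<in>I. \<tau> x * \<phi> x)) \<partial>?P)"
    by (rule nn_integral_sum[symmetric]) measurable
  also have "\<dots> = (\<integral>\<^sup>+\<phi>. (\<Sum>\<sigma>\<in>?S. G (\<lambda>x\<in>I. \<sigma> x * \<bar>\<phi> x\<bar>)) \<partial>?P)"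
  proof (rule nn_integral_cong)
    fix \<phi> :: "'a \<Rightarrow> real"
    define sgn\<phi> where "sgn\<phi> x = (if \<phi> x < 0 then -1 else 1::real)" for x
    define j where "j \<tau> = (\<lambda>x\<in>I. \<tau> x * sgn\<phi> x)" for \<tau> :: "'a \<Rightarrow> real"
    have "j (j \<tau>) = \<tau>" if "\<tau> \<in> ?S" for \<tau>
      using that by (intro PiE_ext[OF _ that]) (auto simp: j_def sgn\<phi>_def PiE_iff)
    moreover have "j \<tau> \<in> ?S" if "\<tau> \<in> ?S" for \<tau>
      using that by (auto simp: j_def sgn\<phi>_def PiE_iff)
    moreover have "(\<lambda>x\<in>I. j \<tau> x * \<bar>\<phi> x\<bar>) = (\<lambda>x\<in>I. \<tau> x * \<phi> x)" for \<tau>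
      by (auto simp: j_def sgn\<phi>_def fun_eq_iff)
    ultimately show "(\<Sum>\<tau>\<in>?S. G (\<lambda>x\<in>I. \<tau> x * \<phi> x)) = (\<Sum>\<sigma>\<in>?S. G (\<lambda>x\<in>I. \<sigma> x * \<bar>\<phi> x\<bar>))"
      by (intro sum.reindex_bij_witness[where i = j and j = j]) auto
  qed
  finally show ?thesis .
qed

lemma rtrancl_preserves_eq:
  assumes "\<forall>(u, v)\<in>r. s u = s v" and "(u, v) \<in> r\<^sup>*"
  shows "s u = s v"
  using assms(2) by induction (use assms(1) in auto)

lemma image_rtrancl_class:
  assumes "\<forall>(u, v)\<in>r. s u = s v"
  shows "s ` (r\<^sup>* `` {u}) = {s u}"
proof -
  have "s v = s u" if "v \<in> r\<^sup>* `` {u}" for v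
    using rtrancl_preserves_eq[of r s u v] assms that by simp
  moreover have "u \<in> r\<^sup>* `` {u}" by simp
  ultimately show ?thesis by blast
qed

lemma rtrancl_class_eq:
  assumes "sym r" and "v \<in> r\<^sup>* `` {u}"
  shows "r\<^sup>* `` {v} = r\<^sup>* `` {u}"
proof -
  have "equiv UNIV (r\<^sup>*)"
    using \<open>sym r\<close> by (simp add: equiv_def refl_rtrancl sym_rtrancl trans_rtrancl)
  then show ?thesis
    using assms(2) equiv_class_eq[of UNIV "r\<^sup>*" u v] by simp
qed

lemma bij_betw_PiE_quotient:
  assumes r: "r \<subseteq> U \<times> U" and "sym r"
  shows "bij_betw (\<lambda>f. \<lambda>u\<in>U. f (r\<^sup>* `` {u})) (U // r\<^sup>* \<rightarrow>\<^sub>E X) {s \<in> U \<rightarrow>\<^sub>E X. \<forall>(u, v)\<in>r. s u = s v}"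
proof -
  let ?R = "r\<^sup>*" and ?S = "{s \<in> U \<rightarrow>\<^sub>E X. \<forall>(u, v)\<in>r. s u = s v}"
  define \<Phi> where "\<Phi> f = (\<lambda>u\<in>U. f (?R `` {u}))" for f :: "'a set \<Rightarrow> 'b"
  define \<Psi> where "\<Psi> s = (\<lambda>C\<in>U // ?R. the_elem (s ` C))" for s :: "'a \<Rightarrow> 'b"
  have \<Phi>_respects: "\<Phi> f u = \<Phi> f v" if "(u, v) \<in> r" for f u v
  proof -
    from r that have "u \<in> U" "v \<in> U" "v \<in> ?R `` {u}" by auto
    then show ?thesis using rtrancl_class_eq[OF \<open>sym r\<close>] by (simp add: \<Phi>_def)
  qed
  have "bij_betw \<Phi> (U // ?R \<rightarrow>\<^sub>E X) ?S"
  proof (rule bij_betw_byWitness[where f' = \<Psi>])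
    have "\<forall>(u, v)\<in>r. \<Phi> f u = \<Phi> f v" for f
      using \<Phi>_respects by blast
    then have "\<Psi> (\<Phi> f) (?R `` {u}) = \<Phi> f u" if "u \<in> U" for f u
      using that image_rtrancl_class[of r "\<Phi> f" u] by (simp add: \<Psi>_def quotientI)
    then show "\<forall>f\<in>U // ?R \<rightarrow>\<^sub>E X. \<Psi> (\<Phi> f) = f"
      by (auto intro!: extensionalityI[of _ "U // ?R"] simp: \<Psi>_def PiE_def \<Phi>_def elim!: quotientE)
    have "\<Phi> (\<Psi> s) u = s u" if "s \<in> ?S" "u \<in> U" for s u
      using that image_rtrancl_class[of r s u] by (simp add: \<Phi>_def \<Psi>_def quotientI)
    then show "\<forall>s\<in>?S. \<Phi> (\<Psi> s) = s"
      by (auto intro!: extensionalityI[of _ U] simp: \<Phi>_def PiE_def)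
    have "\<Phi> f \<in> U \<rightarrow>\<^sub>E X" if f: "f \<in> U // ?R \<rightarrow>\<^sub>E X" for f
    proof -
      have "f (?R `` {u}) \<in> X" if "u \<in> U" for u
        using f quotientI[OF that] by (rule PiE_mem)
      then show ?thesis
        unfolding \<Phi>_def restrict_PiE_iff by blast
    qed
    then show "\<Phi> ` (U // ?R \<rightarrow>\<^sub>E X) \<subseteq> ?S"
      using \<Phi>_respects by auto
    show "\<Psi> ` ?S \<subseteq> U // ?R \<rightarrow>\<^sub>E X"
    proof safe
      fix s C assume s: "s \<in> U \<rightarrow>\<^sub>E X" "\<forall>(u, v)\<in>r. s u = s v" and C: "C \<in> U // ?R"
      then show "\<Psi> s C \<in> X"
        using image_rtrancl_class[OF s(2)] by (auto simp: \<Psi>_def elim!: quotientE)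
    qed (simp add: \<Psi>_def)
  qed
  then show ?thesis
    unfolding \<Phi>_def .
qed

lemma card_PiE_constant_on_classes:
  assumes "finite U" and "r \<subseteq> U \<times> U" and "sym r"
  shows "card {s \<in> U \<rightarrow>\<^sub>E X. \<forall>(u, v)\<in>r. s u = s v} = card X ^ card (U // r\<^sup>*)"
proof -
  have "finite (U // r\<^sup>*)"
    using assms(1) by (simp add: quotient_def)
  then show ?thesis
    using bij_betw_same_card[OF bij_betw_PiE_quotient[OF assms(2,3), of X]] by (simp add: card_PiE)
qed

lemma card_sign_assignments_eq_twice_pinned:
  assumes fin: "finite U" and r: "r \<subseteq> U \<times> U" and "p \<in> U"
  shows "card {s \<in> U \<rightarrow>\<^sub>E {-1, 1::real}. \<forall>(u, v)\<in>r. s u = s v}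
       = 2 * card {s \<in> U \<rightarrow>\<^sub>E {-1, 1::real}. (\<forall>(u, v)\<in>r. s u = s v) \<and> s p = 1}"
proof -
  define A where "A = {s \<in> U \<rightarrow>\<^sub>E {-1, 1::real}. \<forall>(u, v)\<in>r. s u = s v}"
  define neg where "neg s = (\<lambda>u\<in>U. - s u)" for s :: "'a \<Rightarrow> real"
  have neg_neg: "neg (neg s) = s" if "s \<in> A" for s
    using that by (intro extensionalityI[of _ U]) (auto simp: neg_def A_def PiE_def)
  have neg_A: "neg s \<in> A" if s: "s \<in> A" for s
  proof -
    have "neg s \<in> U \<rightarrow>\<^sub>E {-1, 1}"
      using s by (auto simp: neg_def A_def PiE_iff)
    moreover have "neg s u = neg s v" if "(u, v) \<in> r" for u v
      using that r s by (auto simp: neg_def A_def)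
    ultimately show ?thesis by (auto simp: A_def)
  qed
  have neg_p: "neg s p = - s p" for s
    using \<open>p \<in> U\<close> by (simp add: neg_def)
  have "bij_betw neg {s \<in> A. s p = 1} {s \<in> A. s p = -1}"
    by (rule bij_betw_byWitness[where f' = neg]) (simp_all add: image_subset_iff neg_neg neg_A neg_p)
  then have "card {s \<in> A. s p = -1} = card {s \<in> A. s p = 1}"
    by (simp add: bij_betw_same_card)
  moreover have "A = {s \<in> A. s p = 1} \<union> {s \<in> A. s p = -1}"
    using \<open>p \<in> U\<close> by (auto simp: A_def PiE_iff)
  moreover have "finite A"
    unfolding A_def using fin by (intro finite_subset[OF _ finite_PiE[of U "\<lambda>_. {-1, 1::real}"]]) auto
  then have "card ({s \<in> A. s p = 1} \<union> {s \<in> A. s p = -1}) = card {s \<in> A. s p = 1} + card {s \<in> A. s p = -1}"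
    by (intro card_Un_disjoint) auto
  ultimately have "card A = 2 * card {s \<in> A. s p = 1}"
    by simp
  then show ?thesis
    by (simp add: A_def conj_ac)
qed

lemma finite_box: "finite (box d L M)"
proof -
  define K where "K = int (max L M)"
  let ?ext = "\<lambda>f i. if i < d then f i else 0"
  have "box d L M \<subseteq> ?ext ` ({..<d} \<rightarrow>\<^sub>E {-K..K})"
  proof
    fix x assume x: "x \<in> box d L M"
    have "x = ?ext (restrict x {..<d})"
      using x by (auto simp: box_def)
    moreover have "x i \<in> {-K..K}" if "i < d" for i
    proof (cases "i < d - 1")
      case False
      with that have "i = d - 1" by simp
      then show ?thesis using x by (force simp: box_def K_def)
    qed (use x in \<open>force simp: box_def K_def\<close>)
    then have "restrict x {..<d} \<in> {..<d} \<rightarrow>\<^sub>E {-K..K}"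
      by simp
    ultimately show "x \<in> ?ext ` ({..<d} \<rightarrow>\<^sub>E {-K..K})" by blast
  qed
  then show ?thesis
    by (rule finite_subset) (intro finite_imageI finite_PiE; simp)
qed

lemma nn_edgesE:
  assumes "e \<in> nn_edges d \<Lambda>"
  obtains x y where "e = {x, y}" "x \<noteq> y" "x \<in> \<Lambda>" "y \<in> \<Lambda>"
proof -
  obtain x y where xy: "e = {x, y}" "x \<in> \<Lambda>" "y \<in> \<Lambda>" "(\<Sum>i<d. \<bar>x i - y i\<bar>) = 1"
    using assms by (auto simp: nn_edges_def)
  then have "x \<noteq> y" by auto
  with xy that show ?thesis by blast
qed

lemma nn_edges_subset: "e \<in> nn_edges d \<Lambda> \<Longrightarrow> e \<subseteq> \<Lambda>"
  by (auto elim: nn_edgesE)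

lemma finite_nn_edges: "finite \<Lambda> \<Longrightarrow> finite (nn_edges d \<Lambda>)"
proof -
  assume "finite \<Lambda>"
  have "nn_edges d \<Lambda> \<subseteq> (\<lambda>(x, y). {x, y}) ` (\<Lambda> \<times> \<Lambda>)"
    by (auto simp: nn_edges_def)
  then show ?thesis
    by (rule finite_subset) (use \<open>finite \<Lambda>\<close> in auto)
qed

lemma thick_top_subset_box: "thick_top d L M \<subseteq> box d L M"
  and thick_bot_subset_box: "thick_bot d L M \<subseteq> box d L M"
  and thick_top_bot_disjoint: "thick_top d L M \<inter> thick_bot d L M = {}"
  and thick_top_Un_bot: "thick_top d L M \<union> thick_bot d L M = thick_bdry d L M"
  and thick_bdry_subset_box: "thick_bdry d L M \<subseteq> box d L M"
  by (auto simp: thick_top_def thick_bot_def thick_bdry_def box_def)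

lemma finite_thick_top: "finite (thick_top d L M)"
  and finite_thick_bot: "finite (thick_bot d L M)"
  using finite_subset[OF thick_top_subset_box finite_box] finite_subset[OF thick_bot_subset_box finite_box] .

lemma finite_ghost_edges: "finite (ghost_edges d L M)"
  by (simp add: ghost_edges_def finite_nn_edges finite_box finite_thick_top finite_thick_bot)

lemma ghost_edgesE:
  assumes "e \<in> ghost_edges d L M"
  obtains u v where "e = {u, v}" "u \<noteq> v"
    "u \<in> V ` box d L M \<union> {Gp, Gm}" "v \<in> V ` box d L M \<union> {Gp, Gm}"
  using assms thick_top_subset_box thick_bot_subset_box
  by (auto simp: ghost_edges_def elim!: nn_edgesE) blast+

lemma ghost_edges_vertex:
  "e \<in> ghost_edges d L M \<Longrightarrow> w \<in> e \<Longrightarrow> w \<in> V ` box d L M \<union> {Gp, Gm}"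
  by (erule ghost_edgesE) auto

lemma (in comm_monoid_set) ghost_edges:
  "F h (ghost_edges d L M) = F (\<lambda>e. h (V ` e)) (nn_edges d (box d L M))
     \<^bold>* F (\<lambda>x. h {V x, Gp}) (thick_top d L M) \<^bold>* F (\<lambda>x. h {V x, Gm}) (thick_bot d L M)"
proof -
  let ?E = "(\<lambda>e. V ` e) ` nn_edges d (box d L M)"
  let ?T = "(\<lambda>x. {V x, Gp}) ` thick_top d L M" and ?B = "(\<lambda>x. {V x, Gm}) ` thick_bot d L M"
  have fin: "finite ?E" "finite ?T" "finite ?B"
    by (simp_all add: finite_nn_edges finite_box finite_thick_top finite_thick_bot)
  have "?E \<inter> ?T = {}" "(?E \<union> ?T) \<inter> ?B = {}"
    by auto
  then have "F h (ghost_edges d L M) = F h ?E \<^bold>* F h ?T \<^bold>* F h ?B"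
    using fin by (simp add: ghost_edges_def union_disjoint)
  moreover have "inj_on (\<lambda>e. V ` e) (nn_edges d (box d L M))"
    by (rule inj_onI) (simp add: inj_image_eq_iff inj_def)
  moreover have "inj_on (\<lambda>x. {V x, Gp}) A" "inj_on (\<lambda>x. {V x, Gm}) A" for A
    by (auto intro!: inj_onI simp: doubleton_eq_iff)
  ultimately show ?thesis
    by (simp add: reindex)
qed

section \<open>The Edwards--Sokal expansion\<close>

definition compatible :: "('v \<Rightarrow> real) \<Rightarrow> 'v set set \<Rightarrow> bool" where
  "compatible S \<omega> \<longleftrightarrow> (\<forall>u v. {u, v} \<in> \<omega> \<longrightarrow> S u = S v)"

definition bond_weight :: "real \<Rightarrow> ('v \<Rightarrow> real) \<Rightarrow> 'v set set \<Rightarrow> 'v set set \<Rightarrow> real" where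
  "bond_weight \<beta> J E \<omega> = (\<Prod>e\<in>E. edge_factor (1 - exp (- 2 * \<beta> * (\<Prod>w\<in>e. J w))) (e \<in> \<omega>))"

lemma exp_spin_product_expand:
  fixes s t J \<beta> :: real
  assumes "s \<in> {-1, 1}" "t \<in> {-1, 1}"
  shows "exp (\<beta> * (s * t * J))
       = (if s = t then edge_factor (1 - exp (- 2 * \<beta> * J)) True else 0)
         + edge_factor (1 - exp (- 2 * \<beta> * J)) False"
proof -
  have "exp (- (2 * \<beta> * J)) = (exp (- (\<beta> * J)))\<^sup>2"
    by (simp add: power2_eq_square exp_add[symmetric])
  then have sqrt_exp: "sqrt (exp (- (2 * \<beta> * J))) = exp (- (\<beta> * J))"
    by simp
  show ?thesis
  proof (cases "s = t")
    case True
    with assms have "s * t = 1" by auto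
    moreover have "exp (\<beta> * J) = exp (- (\<beta> * J)) * ((1 - exp (- 2 * \<beta> * J)) / exp (- 2 * \<beta> * J))
        + exp (- (\<beta> * J))"
      by (simp add: field_simps exp_add[symmetric])
    ultimately show ?thesis
      using True by (simp add: edge_factor_def sqrt_exp)
  next
    case False
    with assms have "s * t = -1" by auto
    then show ?thesis
      using False by (simp add: edge_factor_def sqrt_exp)
  qed
qed

lemma prod_add_if_expand:
  fixes f g :: "'a \<Rightarrow> 'b::comm_semiring_1"
  assumes "finite E"
  shows "(\<Prod>e\<in>E. (if A e then f e else 0) + g e)
       = (\<Sum>\<omega>\<in>Pow E. if \<forall>e\<in>\<omega>. A e then \<Prod>e\<in>E. if e \<in> \<omega> then f e else g e else 0)"
  unfolding prod_add[OF assms]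
proof (rule sum.cong[OF refl])
  fix \<omega> assume "\<omega> \<in> Pow E"
  then have "\<omega> \<subseteq> E" and "finite \<omega>"
    using assms by (auto intro: finite_subset)
  show "(\<Prod>e\<in>\<omega>. if A e then f e else 0) * (\<Prod>e\<in>E - \<omega>. g e)
      = (if \<forall>e\<in>\<omega>. A e then \<Prod>e\<in>E. if e \<in> \<omega> then f e else g e else 0)"
  proof (cases "\<forall>e\<in>\<omega>. A e")
    case True
    then have "(\<Prod>e\<in>\<omega>. if A e then f e else 0) = prod f \<omega>"
      by (intro prod.cong) auto
    moreover have "(\<Prod>e\<in>E. if e \<in> \<omega> then f e else g e) = prod f \<omega> * prod g (E - \<omega>)"
      using assms \<open>\<omega> \<subseteq> E\<close> by (simp add: prod.If_cases Int_absorb1 Diff_eq)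
    ultimately show ?thesis
      using True by simp
  next
    case False
    then have "(\<Prod>e\<in>\<omega>. if A e then f e else 0) = 0"
      using \<open>finite \<omega>\<close> by (intro prod_zero) auto
    with False show ?thesis
      by auto
  qed
qed

lemma exp_energy_expand:
  assumes fin: "finite E"
    and edges: "\<And>e. e \<in> E \<Longrightarrow> \<exists>u v. e = {u, v} \<and> u \<noteq> v \<and> S u \<in> {-1, 1} \<and> S v \<in> {-1, 1}"
  shows "exp (\<beta> * (\<Sum>e\<in>E. \<Prod>w\<in>e. S w * J w))
       = (\<Sum>\<omega>\<in>Pow E. if compatible S \<omega> then bond_weight \<beta> J E \<omega> else 0)"
proof -
  define p where "p e = 1 - exp (- 2 * \<beta> * (\<Prod>w\<in>e. J w))" for e
  define agree where "agree e \<longleftrightarrow> (\<forall>u\<in>e. \<forall>v\<in>e. S u = S v)" for e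
  have edge: "exp (\<beta> * (\<Prod>w\<in>e. S w * J w))
      = (if agree e then edge_factor (p e) True else 0) + edge_factor (p e) False" if e: "e \<in> E" for e
  proof -
    obtain u v where uv: "e = {u, v}" "u \<noteq> v" "S u \<in> {-1, 1}" "S v \<in> {-1, 1}"
      using edges[OF e] by blast
    then have "(\<Prod>w\<in>e. S w * J w) = S u * S v * (\<Prod>w\<in>e. J w)" "agree e \<longleftrightarrow> S u = S v"
      by (auto simp: agree_def)
    then show ?thesis
      using exp_spin_product_expand[OF uv(3,4), of \<beta> "\<Prod>w\<in>e. J w"] by (simp add: p_def)
  qed
  have agree_iff: "(\<forall>e\<in>\<omega>. agree e) \<longleftrightarrow> compatible S \<omega>" if "\<omega> \<in> Pow E" for \<omega>
  proof
    assume "compatible S \<omega>"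
    moreover have "\<exists>u v. e = {u, v}" if "e \<in> \<omega>" for e
      using edges \<open>\<omega> \<in> Pow E\<close> that by blast
    ultimately show "\<forall>e\<in>\<omega>. agree e" by (fastforce simp: compatible_def agree_def)
  qed (auto simp: compatible_def agree_def)
  have "exp (\<beta> * (\<Sum>e\<in>E. \<Prod>w\<in>e. S w * J w))
      = (\<Prod>e\<in>E. (if agree e then edge_factor (p e) True else 0) + edge_factor (p e) False)"
    using edge by (simp add: sum_distrib_left exp_sum fin)
  also have "\<dots> = (\<Sum>\<omega>\<in>Pow E. if \<forall>e\<in>\<omega>. agree e
      then \<Prod>e\<in>E. if e \<in> \<omega> then edge_factor (p e) True else edge_factor (p e) False else 0)"
    by (rule prod_add_if_expand[OF fin])
  also have "\<dots> = (\<Sum>\<omega>\<in>Pow E. if compatible S \<omega> then bond_weight \<beta> J E \<omega> else 0)"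
  proof (rule sum.cong[OF refl])
    fix \<omega> assume "\<omega> \<in> Pow E"
    have "(if e \<in> \<omega> then edge_factor (p e) True else edge_factor (p e) False) = edge_factor (p e) (e \<in> \<omega>)" for e
      by simp
    then show "(if \<forall>e\<in>\<omega>. agree e
        then \<Prod>e\<in>E. if e \<in> \<omega> then edge_factor (p e) True else edge_factor (p e) False else 0)
      = (if compatible S \<omega> then bond_weight \<beta> J E \<omega> else 0)"
      by (simp only: agree_iff[OF \<open>\<omega> \<in> Pow E\<close>] bond_weight_def p_def)
  qed
  finally show ?thesis .
qed

lemma compatible_cong:
  "(\<And>w. w \<in> \<Union>\<omega> \<Longrightarrow> S w = S' w) \<Longrightarrow> compatible S \<omega> \<longleftrightarrow> compatible S' \<omega>"
  unfolding compatible_def by (metis Union_iff insertI1 insert_commute)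

lemma compatible_mult_iff:
  assumes "\<And>w. c w \<noteq> 0" and "\<And>u v. {u, v} \<in> \<omega> \<Longrightarrow> c u = c v"
  shows "compatible (\<lambda>w. c w * S w) \<omega> \<longleftrightarrow> compatible S \<omega>"
  using assms by (auto simp: compatible_def)

lemma compatible_rtrancl:
  assumes "compatible S \<omega>" and "(u, v) \<in> (open_rel \<omega>)\<^sup>*"
  shows "S u = S v"
  using assms by (intro rtrancl_preserves_eq[of "open_rel \<omega>"]) (auto simp: compatible_def open_rel_def)

section \<open>Spin configurations compatible with a bond configuration\<close>

text \<open>The ghost \<open>Gm\<close> carries spin \<open>m\<close>: \<open>m = 1\<close> realises the field \<open>h_pp\<close> and \<open>m = -1\<close> the
  field \<open>h_pm\<close>.\<close>

definition ghost_spin :: "real \<Rightarrow> ((nat \<Rightarrow> int) \<Rightarrow> real) \<Rightarrow> vtx \<Rightarrow> real" where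
  "ghost_spin m \<sigma> v = (case v of V x \<Rightarrow> \<sigma> x | Gp \<Rightarrow> 1 | Gm \<Rightarrow> m)"

lemma ghost_spin_simps [simp]:
  "ghost_spin m \<sigma> (V x) = \<sigma> x" "ghost_spin m \<sigma> Gp = 1" "ghost_spin m \<sigma> Gm = m"
  by (simp_all add: ghost_spin_def)

lemma ghost_spin_merge_g [simp]: "ghost_spin 1 \<sigma> (merge_g w) = ghost_spin 1 \<sigma> w"
  by (cases w) (simp_all add: merge_g_def)

lemma merged_rel_subset:
  assumes "\<omega> \<subseteq> ghost_edges d L M"
  shows "merged_rel \<omega> \<subseteq> (V ` box d L M \<union> {Gp}) \<times> (V ` box d L M \<union> {Gp})"
proof
  fix p assume "p \<in> merged_rel \<omega>"
  then obtain u v where p: "p = (merge_g u, merge_g v)" and uv: "{u, v} \<in> ghost_edges d L M"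
    using assms by (auto simp: merged_rel_def)
  have "u \<in> V ` box d L M \<union> {Gp, Gm}" "v \<in> V ` box d L M \<union> {Gp, Gm}"
    using ghost_edges_vertex[OF uv] by auto
  then show "p \<in> (V ` box d L M \<union> {Gp}) \<times> (V ` box d L M \<union> {Gp})"
    by (auto simp: p merge_g_def)
qed

lemma sym_merged_rel: "sym (merged_rel \<omega>)"
proof (rule symI)
  fix a b assume "(a, b) \<in> merged_rel \<omega>"
  then obtain u v where "a = merge_g u" "b = merge_g v" "{v, u} \<in> \<omega>"
    by (auto simp: merged_rel_def insert_commute)
  then show "(b, a) \<in> merged_rel \<omega>"
    unfolding merged_rel_def by blast
qed

lemma compatible_iff_merged_rel:
  "compatible (ghost_spin 1 \<sigma>) \<omega> \<longleftrightarrow> (\<forall>(u, v)\<in>merged_rel \<omega>. ghost_spin 1 \<sigma> u = ghost_spin 1 \<sigma> v)"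
proof
  assume "compatible (ghost_spin 1 \<sigma>) \<omega>"
  then show "\<forall>(u, v)\<in>merged_rel \<omega>. ghost_spin 1 \<sigma> u = ghost_spin 1 \<sigma> v"
    by (auto simp: compatible_def merged_rel_def)
next
  assume merged: "\<forall>(u, v)\<in>merged_rel \<omega>. ghost_spin 1 \<sigma> u = ghost_spin 1 \<sigma> v"
  show "compatible (ghost_spin 1 \<sigma>) \<omega>"
    unfolding compatible_def
  proof (intro allI impI)
    fix u v assume "{u, v} \<in> \<omega>"
    then have "(merge_g u, merge_g v) \<in> merged_rel \<omega>"
      by (auto simp: merged_rel_def)
    then show "ghost_spin 1 \<sigma> u = ghost_spin 1 \<sigma> v"
      using merged by fastforce
  qed
qed

lemma merged_rel_respects_iff_compatible:
  assumes "\<omega> \<subseteq> ghost_edges d L M"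
  shows "(\<forall>(u, v)\<in>merged_rel \<omega>. restrict (ghost_spin 1 \<sigma>) (V ` box d L M \<union> {Gp}) u
                                = restrict (ghost_spin 1 \<sigma>) (V ` box d L M \<union> {Gp}) v)
       \<longleftrightarrow> compatible (ghost_spin 1 \<sigma>) \<omega>"
  unfolding compatible_iff_merged_rel
proof (intro ball_cong refl)
  fix p assume "p \<in> merged_rel \<omega>"
  with merged_rel_subset[OF assms] obtain u v
    where "p = (u, v)" "u \<in> V ` box d L M \<union> {Gp}" "v \<in> V ` box d L M \<union> {Gp}"
    by blast
  then show "(case p of (u, v) \<Rightarrow> restrict (ghost_spin 1 \<sigma>) (V ` box d L M \<union> {Gp}) u
                                = restrict (ghost_spin 1 \<sigma>) (V ` box d L M \<union> {Gp}) v)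
      \<longleftrightarrow> (case p of (u, v) \<Rightarrow> ghost_spin 1 \<sigma> u = ghost_spin 1 \<sigma> v)"
    by simp
qed

lemma bij_betw_restrict_ghost_spin:
  assumes \<omega>: "\<omega> \<subseteq> ghost_edges d L M"
  shows "bij_betw (\<lambda>\<sigma>. restrict (ghost_spin 1 \<sigma>) (V ` box d L M \<union> {Gp}))
           {\<sigma> \<in> box d L M \<rightarrow>\<^sub>E {-1, 1}. compatible (ghost_spin 1 \<sigma>) \<omega>}
           {s \<in> V ` box d L M \<union> {Gp} \<rightarrow>\<^sub>E {-1, 1}. (\<forall>(u, v)\<in>merged_rel \<omega>. s u = s v) \<and> s Gp = 1}"
proof (rule bij_betw_byWitness[where f' = "\<lambda>s. \<lambda>x\<in>box d L M. s (V x)"])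
  let ?\<Lambda> = "box d L M" and ?U = "V ` box d L M \<union> {Gp}" and ?X = "{-1, 1::real}"
  let ?restr = "\<lambda>\<sigma>. restrict (ghost_spin 1 \<sigma>) ?U" and ?unrestr = "\<lambda>s. \<lambda>x\<in>?\<Lambda>. s (V x)"
  note respects_iff = merged_rel_respects_iff_compatible[OF \<omega>]
  have restr_unrestr: "?restr (?unrestr s) = s" if "s \<in> ?U \<rightarrow>\<^sub>E ?X" "s Gp = 1" for s
    using that by (intro extensionalityI[of _ ?U]) (auto simp: PiE_def)
  show "\<forall>\<sigma>\<in>{\<sigma> \<in> ?\<Lambda> \<rightarrow>\<^sub>E ?X. compatible (ghost_spin 1 \<sigma>) \<omega>}. ?unrestr (?restr \<sigma>) = \<sigma>"
    by (auto intro!: extensionalityI[of _ ?\<Lambda>] simp: PiE_def)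
  show "\<forall>s\<in>{s \<in> ?U \<rightarrow>\<^sub>E ?X. (\<forall>(u, v)\<in>merged_rel \<omega>. s u = s v) \<and> s Gp = 1}. ?restr (?unrestr s) = s"
    using restr_unrestr by blast
  show "?restr ` {\<sigma> \<in> ?\<Lambda> \<rightarrow>\<^sub>E ?X. compatible (ghost_spin 1 \<sigma>) \<omega>}
      \<subseteq> {s \<in> ?U \<rightarrow>\<^sub>E ?X. (\<forall>(u, v)\<in>merged_rel \<omega>. s u = s v) \<and> s Gp = 1}"
  proof (rule image_subsetI)
    fix \<sigma> assume \<sigma>: "\<sigma> \<in> {\<sigma> \<in> ?\<Lambda> \<rightarrow>\<^sub>E ?X. compatible (ghost_spin 1 \<sigma>) \<omega>}"
    then have "?restr \<sigma> \<in> ?U \<rightarrow>\<^sub>E ?X"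
      by (auto simp: PiE_iff)
    with \<sigma> respects_iff show "?restr \<sigma> \<in> {s \<in> ?U \<rightarrow>\<^sub>E ?X. (\<forall>(u, v)\<in>merged_rel \<omega>. s u = s v) \<and> s Gp = 1}"
      by simp
  qed
  show "?unrestr ` {s \<in> ?U \<rightarrow>\<^sub>E ?X. (\<forall>(u, v)\<in>merged_rel \<omega>. s u = s v) \<and> s Gp = 1}
      \<subseteq> {\<sigma> \<in> ?\<Lambda> \<rightarrow>\<^sub>E ?X. compatible (ghost_spin 1 \<sigma>) \<omega>}"
  proof (rule image_subsetI)
    fix s assume "s \<in> {s \<in> ?U \<rightarrow>\<^sub>E ?X. (\<forall>(u, v)\<in>merged_rel \<omega>. s u = s v) \<and> s Gp = 1}"
    then have s: "s \<in> ?U \<rightarrow>\<^sub>E ?X" "\<forall>(u, v)\<in>merged_rel \<omega>. s u = s v" "s Gp = 1"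
      by auto
    then have "?unrestr s \<in> ?\<Lambda> \<rightarrow>\<^sub>E ?X"
      by (auto simp: PiE_iff)
    moreover have "compatible (ghost_spin 1 (?unrestr s)) \<omega>"
      using respects_iff[of "?unrestr s", unfolded restr_unrestr[OF s(1,3)]] s(2) by simp
    ultimately show "?unrestr s \<in> {\<sigma> \<in> ?\<Lambda> \<rightarrow>\<^sub>E ?X. compatible (ghost_spin 1 \<sigma>) \<omega>}"
      by simp
  qed
qed

lemma card_compatible_plus:
  assumes "\<omega> \<subseteq> ghost_edges d L M"
  shows "2 * card {\<sigma> \<in> box d L M \<rightarrow>\<^sub>E {-1, 1}. compatible (ghost_spin 1 \<sigma>) \<omega>} = 2 ^ k_tilde d L M \<omega>"
proof -
  let ?U = "V ` box d L M \<union> {Gp}"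
  have r: "merged_rel \<omega> \<subseteq> ?U \<times> ?U"
    by (rule merged_rel_subset[OF assms])
  have "2 * card {\<sigma> \<in> box d L M \<rightarrow>\<^sub>E {-1, 1}. compatible (ghost_spin 1 \<sigma>) \<omega>}
      = 2 * card {s \<in> ?U \<rightarrow>\<^sub>E {-1, 1::real}. (\<forall>(u, v)\<in>merged_rel \<omega>. s u = s v) \<and> s Gp = 1}"
    by (simp add: bij_betw_same_card[OF bij_betw_restrict_ghost_spin[OF assms]])
  also have "\<dots> = card {s \<in> ?U \<rightarrow>\<^sub>E {-1, 1::real}. \<forall>(u, v)\<in>merged_rel \<omega>. s u = s v}"
    using card_sign_assignments_eq_twice_pinned[OF _ r, of Gp] finite_box by simp
  also have "\<dots> = 2 ^ k_tilde d L M \<omega>"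
    using card_PiE_constant_on_classes[OF _ r sym_merged_rel, of "{-1, 1::real}"] finite_box
    by (simp add: k_tilde_def numeral_2_eq_2)
  finally show ?thesis .
qed

lemma not_compatible_if_ghosts_connected:
  assumes "ghosts_connected \<omega>"
  shows "\<not> compatible (ghost_spin (-1) \<sigma>) \<omega>"
  using assms compatible_rtrancl[of "ghost_spin (-1) \<sigma>" \<omega> Gm Gp] by (auto simp: ghosts_connected_def)

lemma card_compatible_minus:
  assumes \<omega>: "\<omega> \<subseteq> ghost_edges d L M"
  shows "card {\<sigma> \<in> box d L M \<rightarrow>\<^sub>E {-1, 1}. compatible (ghost_spin (-1) \<sigma>) \<omega>}
       = (if ghosts_connected \<omega> then 0
          else card {\<sigma> \<in> box d L M \<rightarrow>\<^sub>E {-1, 1}. compatible (ghost_spin 1 \<sigma>) \<omega>})"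
proof (cases "ghosts_connected \<omega>")
  case True
  then show ?thesis
    using not_compatible_if_ghosts_connected by simp
next
  case False
  let ?\<Lambda> = "box d L M" and ?X = "{-1, 1::real}"
  txt \<open>Flip the open cluster of \<open>Gm\<close>, which does not contain \<open>Gp\<close>.\<close>
  define c where "c w = (if (Gm, w) \<in> (open_rel \<omega>)\<^sup>* then -1 else 1::real)" for w
  define flip where "flip \<sigma> = (\<lambda>x\<in>?\<Lambda>. c (V x) * \<sigma> x)" for \<sigma> :: "(nat \<Rightarrow> int) \<Rightarrow> real"
  have c_Gp: "c Gp = 1" and c_Gm: "c Gm = -1"
    using False by (simp_all add: c_def ghosts_connected_def)
  have c_edge: "c u = c v" if "{u, v} \<in> \<omega>" for u v
  proof -
    from that have "(u, v) \<in> open_rel \<omega>" "(v, u) \<in> open_rel \<omega>"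
      by (auto simp: open_rel_def insert_commute)
    then have "(Gm, u) \<in> (open_rel \<omega>)\<^sup>* \<longleftrightarrow> (Gm, v) \<in> (open_rel \<omega>)\<^sup>*"
      by (meson rtrancl.rtrancl_into_rtrancl)
    then show ?thesis by (simp add: c_def)
  qed
  have vertices: "w \<in> V ` ?\<Lambda> \<union> {Gp, Gm}" if "w \<in> \<Union>\<omega>" for w
    using that \<omega> ghost_edges_vertex by blast
  have compatible_flip: "compatible (ghost_spin m (flip \<sigma>)) \<omega> \<longleftrightarrow> compatible (ghost_spin (- m) \<sigma>) \<omega>"
    if "m \<in> {-1, 1}" for m \<sigma>
  proof -
    have "ghost_spin m (flip \<sigma>) w = c w * ghost_spin (- m) \<sigma> w" if "w \<in> \<Union>\<omega>" for w
      using vertices[OF that] \<open>m \<in> {-1, 1}\<close> c_Gp c_Gm by (auto simp: flip_def)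
    then have "compatible (ghost_spin m (flip \<sigma>)) \<omega> \<longleftrightarrow> compatible (\<lambda>w. c w * ghost_spin (- m) \<sigma> w) \<omega>"
      by (rule compatible_cong)
    also have "\<dots> \<longleftrightarrow> compatible (ghost_spin (- m) \<sigma>) \<omega>"
      by (rule compatible_mult_iff[OF _ c_edge]) (simp add: c_def)
    finally show ?thesis .
  qed
  have "flip (flip \<sigma>) = \<sigma>" if "\<sigma> \<in> ?\<Lambda> \<rightarrow>\<^sub>E ?X" for \<sigma>
    using that by (intro extensionalityI[of _ ?\<Lambda>]) (auto simp: flip_def c_def PiE_def)
  moreover have "flip \<sigma> \<in> ?\<Lambda> \<rightarrow>\<^sub>E ?X" if "\<sigma> \<in> ?\<Lambda> \<rightarrow>\<^sub>E ?X" for \<sigma>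
    using that by (auto simp: flip_def c_def PiE_iff)
  ultimately have "bij_betw flip {\<sigma> \<in> ?\<Lambda> \<rightarrow>\<^sub>E ?X. compatible (ghost_spin (-1) \<sigma>) \<omega>}
      {\<sigma> \<in> ?\<Lambda> \<rightarrow>\<^sub>E ?X. compatible (ghost_spin 1 \<sigma>) \<omega>}"
    using compatible_flip[of 1] compatible_flip[of "-1"]
    by (intro bij_betw_byWitness[where f' = flip]) auto
  then show ?thesis
    using False by (simp add: bij_betw_same_card)
qed

section \<open>Spin sums as sums over bond configurations\<close>

definition phi4_weight :: "nat \<Rightarrow> (nat \<Rightarrow> int) set \<Rightarrow> real \<Rightarrow> ((nat \<Rightarrow> int) \<Rightarrow> real)
    \<Rightarrow> ((nat \<Rightarrow> int) \<Rightarrow> real) \<Rightarrow> real" where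
  "phi4_weight d \<Lambda> \<beta> h \<phi> = exp (\<beta> * (\<Sum>e\<in>nn_edges d \<Lambda>. \<Prod>v\<in>e. \<phi> v) + \<beta> * (\<Sum>x\<in>\<Lambda>. h x * \<phi> x))"

lemma phi4_weight_cong:
  assumes "\<And>x. x \<in> \<Lambda> \<Longrightarrow> \<phi> x = \<psi> x"
  shows "phi4_weight d \<Lambda> \<beta> h \<phi> = phi4_weight d \<Lambda> \<beta> h \<psi>"
proof -
  have "(\<Prod>v\<in>e. \<phi> v) = (\<Prod>v\<in>e. \<psi> v)" if "e \<in> nn_edges d \<Lambda>" for e
    using assms nn_edges_subset[OF that] by (intro prod.cong) auto
  then show ?thesis
    using assms by (simp add: phi4_weight_def)
qed

lemma spin_sum_expand:
  assumes "m \<in> {-1, 1}"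
  shows "(\<Sum>\<sigma>\<in>box d L M \<rightarrow>\<^sub>E {-1, 1}. exp (\<beta> * (\<Sum>e\<in>ghost_edges d L M. \<Prod>w\<in>e. ghost_spin m \<sigma> w * J w)))
       = (\<Sum>\<omega>\<in>Pow (ghost_edges d L M). bond_weight \<beta> J (ghost_edges d L M) \<omega>
            * card {\<sigma> \<in> box d L M \<rightarrow>\<^sub>E {-1, 1}. compatible (ghost_spin m \<sigma>) \<omega>})"
proof -
  let ?S = "box d L M \<rightarrow>\<^sub>E {-1, 1::real}" and ?E = "ghost_edges d L M"
  have "exp (\<beta> * (\<Sum>e\<in>?E. \<Prod>w\<in>e. ghost_spin m \<sigma> w * J w))
      = (\<Sum>\<omega>\<in>Pow ?E. if compatible (ghost_spin m \<sigma>) \<omega> then bond_weight \<beta> J ?E \<omega> else 0)"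
    if \<sigma>: "\<sigma> \<in> ?S" for \<sigma>
  proof (rule exp_energy_expand[OF finite_ghost_edges])
    fix e assume "e \<in> ?E"
    then obtain u v where "e = {u, v}" "u \<noteq> v"
      "u \<in> V ` box d L M \<union> {Gp, Gm}" "v \<in> V ` box d L M \<union> {Gp, Gm}"
      by (rule ghost_edgesE)
    moreover have "ghost_spin m \<sigma> w \<in> {-1, 1}" if "w \<in> V ` box d L M \<union> {Gp, Gm}" for w
      using that \<sigma> assms by auto
    ultimately show "\<exists>u v. e = {u, v} \<and> u \<noteq> v \<and> ghost_spin m \<sigma> u \<in> {-1, 1} \<and> ghost_spin m \<sigma> v \<in> {-1, 1}"
      by blast
  qed
  then have "(\<Sum>\<sigma>\<in>?S. exp (\<beta> * (\<Sum>e\<in>?E. \<Prod>w\<in>e. ghost_spin m \<sigma> w * J w)))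
      = (\<Sum>\<omega>\<in>Pow ?E. \<Sum>\<sigma>\<in>?S. if compatible (ghost_spin m \<sigma>) \<omega> then bond_weight \<beta> J ?E \<omega> else 0)"
    by (simp add: sum.swap[of _ "Pow ?E"])
  also have "\<dots> = (\<Sum>\<omega>\<in>Pow ?E. bond_weight \<beta> J ?E \<omega> * card {\<sigma> \<in> ?S. compatible (ghost_spin m \<sigma>) \<omega>})"
    by (simp add: sum.inter_filter[symmetric] finite_PiE finite_box mult.commute)
  finally show ?thesis .
qed

lemma ghost_energy:
  "(\<Sum>e\<in>ghost_edges d L M. \<Prod>w\<in>e. ghost_spin m \<sigma> w * ghost_spin 1 a w)
     = (\<Sum>e\<in>nn_edges d (box d L M). \<Prod>v\<in>e. \<sigma> v * a v)
       + (\<Sum>x\<in>thick_top d L M. \<sigma> x * a x) + m * (\<Sum>x\<in>thick_bot d L M. \<sigma> x * a x)"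
  by (simp add: sum.ghost_edges prod.reindex inj_on_def sum_distrib_left mult_ac)

lemma sum_indicator_mult:
  fixes f :: "'a \<Rightarrow> 'b::semiring_1"
  assumes "finite A" and "B \<subseteq> A"
  shows "(\<Sum>x\<in>A. (if x \<in> B then 1 else 0) * f x) = sum f B"
proof -
  have "(\<Sum>x\<in>A. (if x \<in> B then 1 else 0) * f x) = (\<Sum>x\<in>A. if x \<in> B then f x else 0)"
    by (rule sum.cong) simp_all
  also have "\<dots> = sum f B"
    using assms by (simp add: sum.inter_restrict[symmetric] Int_absorb1)
  finally show ?thesis .
qed

lemma field_energy_pp:
  "(\<Sum>x\<in>box d L M. h_pp d L M x * \<phi> x) = (\<Sum>x\<in>thick_top d L M. \<phi> x) + (\<Sum>x\<in>thick_bot d L M. \<phi> x)"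
proof -
  have "(\<Sum>x\<in>box d L M. h_pp d L M x * \<phi> x) = sum \<phi> (thick_bdry d L M)"
    using thick_bdry_subset_box by (simp add: h_pp_def sum_indicator_mult finite_box)
  also have "\<dots> = (\<Sum>x\<in>thick_top d L M. \<phi> x) + (\<Sum>x\<in>thick_bot d L M. \<phi> x)"
    unfolding thick_top_Un_bot[symmetric]
    by (rule sum.union_disjoint) (simp_all add: finite_thick_top finite_thick_bot thick_top_bot_disjoint)
  finally show ?thesis .
qed

lemma field_energy_pm:
  "(\<Sum>x\<in>box d L M. h_pm d L M x * \<phi> x) = (\<Sum>x\<in>thick_top d L M. \<phi> x) - (\<Sum>x\<in>thick_bot d L M. \<phi> x)"
  using thick_top_subset_box thick_bot_subset_box
  by (simp add: h_pm_def left_diff_distrib sum_subtractf sum_indicator_mult finite_box)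

lemma phi4_weight_pp_spin:
  "phi4_weight d (box d L M) \<beta> (h_pp d L M) (\<lambda>x. \<sigma> x * a x)
     = exp (\<beta> * (\<Sum>e\<in>ghost_edges d L M. \<Prod>w\<in>e. ghost_spin 1 \<sigma> w * ghost_spin 1 a w))"
  unfolding phi4_weight_def ghost_energy field_energy_pp by (simp add: algebra_simps)

lemma phi4_weight_pm_spin:
  "phi4_weight d (box d L M) \<beta> (h_pm d L M) (\<lambda>x. \<sigma> x * a x)
     = exp (\<beta> * (\<Sum>e\<in>ghost_edges d L M. \<Prod>w\<in>e. ghost_spin (-1) \<sigma> w * ghost_spin 1 a w))"
  unfolding phi4_weight_def ghost_energy field_energy_pm by (simp add: algebra_simps)

lemma rc_weight_eq_bond_weight:
  "rc_weight d L M \<beta> \<omega> a = bond_weight \<beta> (ghost_spin 1 a) (ghost_edges d L M) \<omega> * 2 ^ k_tilde d L M \<omega>"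
proof -
  have "h_pp d L M x = 1" if "x \<in> thick_top d L M \<union> thick_bot d L M" for x
    using that by (simp add: h_pp_def thick_top_Un_bot)
  then show ?thesis
    unfolding rc_weight_def bond_weight_def prod.ghost_edges
    by (simp add: prod.reindex inj_on_def cong: prod.cong)
qed

lemma spin_sum_pp:
  "2 * (\<Sum>\<sigma>\<in>box d L M \<rightarrow>\<^sub>E {-1, 1}. phi4_weight d (box d L M) \<beta> (h_pp d L M) (\<lambda>x. \<sigma> x * a x))
     = (\<Sum>\<omega>\<in>Pow (ghost_edges d L M). rc_weight d L M \<beta> \<omega> a)"
proof -
  have "2 * (\<Sum>\<sigma>\<in>box d L M \<rightarrow>\<^sub>E {-1, 1}. phi4_weight d (box d L M) \<beta> (h_pp d L M) (\<lambda>x. \<sigma> x * a x))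
      = (\<Sum>\<omega>\<in>Pow (ghost_edges d L M). bond_weight \<beta> (ghost_spin 1 a) (ghost_edges d L M) \<omega>
           * (2 * card {\<sigma> \<in> box d L M \<rightarrow>\<^sub>E {-1, 1}. compatible (ghost_spin 1 \<sigma>) \<omega>}))"
    unfolding phi4_weight_pp_spin spin_sum_expand[of 1, simplified] by (simp add: sum_distrib_left mult_ac)
  also have "\<dots> = (\<Sum>\<omega>\<in>Pow (ghost_edges d L M). rc_weight d L M \<beta> \<omega> a)"
    by (rule sum.cong) (simp_all add: card_compatible_plus rc_weight_eq_bond_weight)
  finally show ?thesis .
qed

lemma spin_sum_pm:
  "2 * (\<Sum>\<sigma>\<in>box d L M \<rightarrow>\<^sub>E {-1, 1}. phi4_weight d (box d L M) \<beta> (h_pm d L M) (\<lambda>x. \<sigma> x * a x))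
     = (\<Sum>\<omega>\<in>{\<omega> \<in> Pow (ghost_edges d L M). \<not> ghosts_connected \<omega>}. rc_weight d L M \<beta> \<omega> a)"
proof -
  have "2 * (\<Sum>\<sigma>\<in>box d L M \<rightarrow>\<^sub>E {-1, 1}. phi4_weight d (box d L M) \<beta> (h_pm d L M) (\<lambda>x. \<sigma> x * a x))
      = (\<Sum>\<omega>\<in>Pow (ghost_edges d L M). bond_weight \<beta> (ghost_spin 1 a) (ghost_edges d L M) \<omega>
           * (2 * card {\<sigma> \<in> box d L M \<rightarrow>\<^sub>E {-1, 1}. compatible (ghost_spin (-1) \<sigma>) \<omega>}))"
    unfolding phi4_weight_pm_spin spin_sum_expand[of "-1", simplified] by (simp add: sum_distrib_left mult_ac)
  also have "\<dots> = (\<Sum>\<omega>\<in>Pow (ghost_edges d L M). if ghosts_connected \<omega> then 0 else rc_weight d L M \<beta> \<omega> a)"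
  proof (rule sum.cong[OF refl])
    fix \<omega> assume "\<omega> \<in> Pow (ghost_edges d L M)"
    then have "2 * card {\<sigma> \<in> box d L M \<rightarrow>\<^sub>E {-1, 1}. compatible (ghost_spin (-1) \<sigma>) \<omega>}
        = (if ghosts_connected \<omega> then 0 else 2 ^ k_tilde d L M \<omega>)"
      using card_compatible_minus card_compatible_plus by simp
    then show "bond_weight \<beta> (ghost_spin 1 a) (ghost_edges d L M) \<omega>
          * (2 * card {\<sigma> \<in> box d L M \<rightarrow>\<^sub>E {-1, 1}. compatible (ghost_spin (-1) \<sigma>) \<omega>})
        = (if ghosts_connected \<omega> then 0 else rc_weight d L M \<beta> \<omega> a)"
      by (simp add: rc_weight_eq_bond_weight)
  qed
  also have "\<dots> = (\<Sum>\<omega>\<in>{\<omega> \<in> Pow (ghost_edges d L M). \<not> ghosts_connected \<omega>}. rc_weight d L M \<beta> \<omega> a)"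
    unfolding sum.inter_filter[OF finite_Pow_iff[THEN iffD2, OF finite_ghost_edges]]
    by (rule sum.cong) simp_all
  finally show ?thesis .
qed

definition cluster_integral :: "nat \<Rightarrow> real \<Rightarrow> real \<Rightarrow> nat \<Rightarrow> nat \<Rightarrow> real \<Rightarrow> (vtx set set \<Rightarrow> bool) \<Rightarrow> ennreal" where
  "cluster_integral d g a L M \<beta> P =
     (\<integral>\<^sup>+\<phi>. ennreal (\<Sum>\<omega>\<in>{\<omega> \<in> Pow (ghost_edges d L M). P \<omega>}. rc_weight d L M \<beta> \<omega> (\<lambda>x\<in>box d L M. \<bar>\<phi> x\<bar>))
        \<partial>PiM (box d L M) (\<lambda>_. rho g a))"

lemma rc_weight_nonneg:
  assumes "\<beta> \<ge> 0" and "\<And>x. x \<in> box d L M \<Longrightarrow> aa x \<ge> 0"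
  shows "rc_weight d L M \<beta> \<omega> aa \<ge> 0"
proof -
  have edge_factor_nonneg: "edge_factor (1 - exp (- t)) b \<ge> 0" if "t \<ge> 0" for t b
    using that by (simp add: edge_factor_def)
  have "(\<Prod>v\<in>e. aa v) \<ge> 0" if "e \<in> nn_edges d (box d L M)" for e
    using assms(2) nn_edges_subset[OF that] by (intro prod_nonneg) auto
  moreover have "h_pp d L M x \<ge> 0" for x
    by (simp add: h_pp_def)
  moreover have "aa x \<ge> 0" if "x \<in> thick_top d L M \<or> x \<in> thick_bot d L M" for x
    using that assms(2) thick_top_subset_box thick_bot_subset_box by blast
  ultimately show ?thesis
    unfolding rc_weight_def using assms(1)
    by (intro mult_nonneg_nonneg prod_nonneg zero_le_power)
      (auto simp: mult.assoc intro!: edge_factor_nonneg mult_nonneg_nonneg)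
qed

lemma measurable_phi4_weight [measurable]:
  "phi4_weight d \<Lambda> \<beta> h \<in> borel_measurable (PiM \<Lambda> (\<lambda>_. rho g a))"
  unfolding phi4_weight_def by measurable

lemma Z_phi4_eq_nn_integral:
  "Z_phi4 d g a \<Lambda> \<beta> h = enn2real (\<integral>\<^sup>+\<phi>. phi4_weight d \<Lambda> \<beta> h \<phi> \<partial>PiM \<Lambda> (\<lambda>_. rho g a))"
  unfolding Z_phi4_def phi4_weight_def[symmetric]
  by (intro integral_eq_nn_integral) (auto simp: phi4_weight_def)

lemma cluster_integral_eq_nn_integral_phi4_weight:
  assumes "g > 0"
    and spin_sum: "\<And>aa. 2 * (\<Sum>\<sigma>\<in>box d L M \<rightarrow>\<^sub>E {-1, 1}. phi4_weight d (box d L M) \<beta> h (\<lambda>x. \<sigma> x * aa x))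
                   = (\<Sum>\<omega>\<in>{\<omega> \<in> Pow (ghost_edges d L M). P \<omega>}. rc_weight d L M \<beta> \<omega> aa)"
  shows "cluster_integral d g a L M \<beta> P
       = (\<integral>\<^sup>+\<phi>. phi4_weight d (box d L M) \<beta> h \<phi> \<partial>PiM (box d L M) (\<lambda>_. rho g a)) * 2 ^ Suc (card (box d L M))"
proof -
  let ?\<Lambda> = "box d L M"
  let ?P = "PiM ?\<Lambda> (\<lambda>_. rho g a)" and ?F = "phi4_weight d ?\<Lambda> \<beta> h"
  have "ennreal (\<Sum>\<omega>\<in>{\<omega> \<in> Pow (ghost_edges d L M). P \<omega>}. rc_weight d L M \<beta> \<omega> (\<lambda>x\<in>?\<Lambda>. \<bar>\<phi> x\<bar>))
      = (\<Sum>\<sigma>\<in>?\<Lambda> \<rightarrow>\<^sub>E {-1, 1}. ennreal (?F (\<lambda>x\<in>?\<Lambda>. \<sigma> x * \<bar>\<phi> x\<bar>))) * 2" for \<phi>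
  proof -
    have "?F (\<lambda>x\<in>?\<Lambda>. \<sigma> x * \<bar>\<phi> x\<bar>) = ?F (\<lambda>x. \<sigma> x * (\<lambda>x\<in>?\<Lambda>. \<bar>\<phi> x\<bar>) x)" for \<sigma>
      by (rule phi4_weight_cong) simp
    moreover have "?F \<psi> \<ge> 0" for \<psi>
      by (simp add: phi4_weight_def)
    ultimately show ?thesis
      unfolding spin_sum[symmetric] by (simp add: sum_ennreal ennreal_mult sum_nonneg mult.commute)
  qed
  then have "cluster_integral d g a L M \<beta> P
      = (\<integral>\<^sup>+\<phi>. (\<Sum>\<sigma>\<in>?\<Lambda> \<rightarrow>\<^sub>E {-1, 1}. ennreal (?F (\<lambda>x\<in>?\<Lambda>. \<sigma> x * \<bar>\<phi> x\<bar>))) * 2 \<partial>?P)"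
    by (simp add: cluster_integral_def)
  also have "\<dots> = (\<integral>\<^sup>+\<phi>. (\<Sum>\<sigma>\<in>?\<Lambda> \<rightarrow>\<^sub>E {-1, 1}. ennreal (?F (\<lambda>x\<in>?\<Lambda>. \<sigma> x * \<bar>\<phi> x\<bar>))) \<partial>?P) * 2"
    by (rule nn_integral_multc) measurable
  also have "(\<integral>\<^sup>+\<phi>. (\<Sum>\<sigma>\<in>?\<Lambda> \<rightarrow>\<^sub>E {-1, 1}. ennreal (?F (\<lambda>x\<in>?\<Lambda>. \<sigma> x * \<bar>\<phi> x\<bar>))) \<partial>?P)
      = (\<integral>\<^sup>+\<phi>. ?F \<phi> \<partial>?P) * 2 ^ card ?\<Lambda>"
    by (rule nn_integral_PiM_sign_average[symmetric])
      (simp_all add: finite_box prob_space_rho \<open>g > 0\<close> distr_rho_uminus)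
  finally show ?thesis
    by (simp add: mult_ac)
qed

lemma Z_phi4_box_eq_cluster_integral:
  assumes "g > 0"
    and "\<And>aa. 2 * (\<Sum>\<sigma>\<in>box d L M \<rightarrow>\<^sub>E {-1, 1}. phi4_weight d (box d L M) \<beta> h (\<lambda>x. \<sigma> x * aa x))
                   = (\<Sum>\<omega>\<in>{\<omega> \<in> Pow (ghost_edges d L M). P \<omega>}. rc_weight d L M \<beta> \<omega> aa)"
  shows "Z_phi4 d g a (box d L M) \<beta> h = enn2real (cluster_integral d g a L M \<beta> P) / 2 ^ Suc (card (box d L M))"
proof -
  have "enn2real (2 ^ n) = (2::real) ^ n" for n
    by (induction n) (simp_all add: enn2real_mult)
  then show ?thesis
    unfolding Z_phi4_eq_nn_integral cluster_integral_eq_nn_integral_phi4_weight[OF assms]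
    by (simp add: enn2real_mult)
qed

lemma rc_base_eq_distr:
  assumes "g > 0"
  shows "rc_base d g a L M
       = distr (count_space (Pow (ghost_edges d L M)) \<Otimes>\<^sub>M PiM (box d L M) (\<lambda>_. rho g a))
           (count_space (Pow (ghost_edges d L M)) \<Otimes>\<^sub>M PiM (box d L M) (\<lambda>_. rho g a))
           (\<lambda>(\<omega>, \<phi>). (\<omega>, \<lambda>x\<in>box d L M. \<bar>\<phi> x\<bar>))"
proof -
  let ?C = "count_space (Pow (ghost_edges d L M))" and ?P = "PiM (box d L M) (\<lambda>_. rho g a)"
  let ?abs = "\<lambda>\<phi>. \<lambda>x\<in>box d L M. \<bar>\<phi> x\<bar>"
  have abs_meas: "?abs \<in> ?P \<rightarrow>\<^sub>M ?P"
    by measurable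
  have "PiM (box d L M) (\<lambda>_. distr (rho g a) borel abs) = PiM (box d L M) (\<lambda>_. distr (rho g a) (rho g a) abs)"
    by (intro PiM_cong distr_cong) simp_all
  also have "\<dots> = distr ?P ?P ?abs"
    by (rule distr_PiM_coordinatewise[symmetric]) (simp_all add: finite_box prob_space_rho \<open>g > 0\<close>)
  finally have "rc_base d g a L M = distr ?C ?C (\<lambda>\<omega>. \<omega>) \<Otimes>\<^sub>M distr ?P ?P ?abs"
    by (simp add: rc_base_def distr_id)
  also have "\<dots> = distr (?C \<Otimes>\<^sub>M ?P) (?C \<Otimes>\<^sub>M ?P) (\<lambda>(\<omega>, \<phi>). (\<omega>, ?abs \<phi>))"
    using abs_meas prob_space.prob_space_distr[OF prob_space_PiM[OF prob_space_rho[OF \<open>g > 0\<close>]] abs_meas]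
    by (intro pair_measure_distr) (auto intro: prob_space_imp_sigma_finite)
  finally show ?thesis .
qed

lemma nn_integral_rc_base:
  assumes "g > 0"
    and f: "f \<in> borel_measurable (count_space (Pow (ghost_edges d L M)) \<Otimes>\<^sub>M PiM (box d L M) (\<lambda>_. rho g a))"
  shows "(\<integral>\<^sup>+p. f p \<partial>rc_base d g a L M)
       = (\<integral>\<^sup>+\<phi>. (\<Sum>\<omega>\<in>Pow (ghost_edges d L M). f (\<omega>, \<lambda>x\<in>box d L M. \<bar>\<phi> x\<bar>)) \<partial>PiM (box d L M) (\<lambda>_. rho g a))"
proof -
  let ?C = "count_space (Pow (ghost_edges d L M))" and ?P = "PiM (box d L M) (\<lambda>_. rho g a)"
  let ?T = "\<lambda>(\<omega>, \<phi>). (\<omega>, \<lambda>x\<in>box d L M. \<bar>\<phi> x\<bar>)"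
  interpret P: prob_space ?P
    by (intro prob_space_PiM prob_space_rho \<open>g > 0\<close>)
  have T: "?T \<in> ?C \<Otimes>\<^sub>M ?P \<rightarrow>\<^sub>M ?C \<Otimes>\<^sub>M ?P"
    by measurable
  have fT [measurable]: "(\<lambda>p. f (?T p)) \<in> borel_measurable (?C \<Otimes>\<^sub>M ?P)"
    using measurable_compose[OF T f] .
  have "(\<integral>\<^sup>+p. f p \<partial>rc_base d g a L M) = (\<integral>\<^sup>+p. f (?T p) \<partial>(?C \<Otimes>\<^sub>M ?P))"
    unfolding rc_base_eq_distr[OF \<open>g > 0\<close>] by (rule nn_integral_distr[OF T]) (simp add: f)
  also have "\<dots> = (\<integral>\<^sup>+\<omega>. \<integral>\<^sup>+\<phi>. f (?T (\<omega>, \<phi>)) \<partial>?P \<partial>?C)"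
    by (rule P.nn_integral_fst[symmetric]) measurable
  also have "\<dots> = (\<Sum>\<omega>\<in>Pow (ghost_edges d L M). \<integral>\<^sup>+\<phi>. f (?T (\<omega>, \<phi>)) \<partial>?P)"
    by (rule nn_integral_count_space_finite) (simp add: finite_ghost_edges)
  also have "\<dots> = (\<integral>\<^sup>+\<phi>. (\<Sum>\<omega>\<in>Pow (ghost_edges d L M). f (?T (\<omega>, \<phi>))) \<partial>?P)"
    by (rule nn_integral_sum[symmetric]) measurable
  finally show ?thesis
    by simp
qed

lemma measurable_rc_weight_config:
  "rc_weight d L M \<beta> \<omega> \<in> borel_measurable (PiM (box d L M) (\<lambda>_. rho g a))"
  unfolding rc_weight_def edge_factor_def by measurable

lemma measurable_rc_weight [measurable]:
  "(\<lambda>p. rc_weight d L M \<beta> (fst p) (snd p))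
     \<in> borel_measurable (count_space (Pow (ghost_edges d L M)) \<Otimes>\<^sub>M PiM (box d L M) (\<lambda>_. rho g a))"
  by (rule measurable_pair_measure_countable1[where f = "\<lambda>p. rc_weight d L M \<beta> (fst p) (snd p)", simplified])
    (simp_all add: countable_finite finite_ghost_edges measurable_rc_weight_config)

lemma measurable_rc_weight_abs [measurable]:
  "(\<lambda>\<phi>. rc_weight d L M \<beta> \<omega> (\<lambda>x\<in>box d L M. \<bar>\<phi> x\<bar>)) \<in> borel_measurable (PiM (box d L M) (\<lambda>_. rho g a))"
proof (rule measurable_compose[OF _ measurable_rc_weight_config])
  show "(\<lambda>\<phi>. \<lambda>x\<in>box d L M. \<bar>\<phi> x\<bar>) \<in> PiM (box d L M) (\<lambda>_. rho g a) \<rightarrow>\<^sub>M PiM (box d L M) (\<lambda>_. rho g a)"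
    by measurable
qed

lemma integral_rc_weight_eq_cluster_integral:
  assumes "g > 0" and "\<beta> \<ge> 0"
  shows "(\<integral>(\<omega>, aa). rc_weight d L M \<beta> \<omega> aa \<partial>rc_base d g a L M)
       = enn2real (cluster_integral d g a L M \<beta> (\<lambda>_. True))"
proof -
  let ?B = "count_space (Pow (ghost_edges d L M)) \<Otimes>\<^sub>M PiM (box d L M) (\<lambda>_. rho g a)"
  let ?T = "\<lambda>(\<omega>, \<phi>). (\<omega>, \<lambda>x\<in>box d L M. \<bar>\<phi> x\<bar>)"
  let ?W = "\<lambda>p. rc_weight d L M \<beta> (fst p) (snd p)"
  have T: "?T \<in> ?B \<rightarrow>\<^sub>M ?B"
    by measurable
  have W_T_nonneg: "?W (?T p) \<ge> 0" for p
    using \<open>\<beta> \<ge> 0\<close> by (auto simp: split_beta intro!: rc_weight_nonneg)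
  have "(\<integral>p. ?W p \<partial>rc_base d g a L M) = (\<integral>p. ?W (?T p) \<partial>?B)"
    unfolding rc_base_eq_distr[OF \<open>g > 0\<close>] by (rule integral_distr[OF T]) measurable
  also have "\<dots> = enn2real (\<integral>\<^sup>+p. ?W (?T p) \<partial>?B)"
    using W_T_nonneg by (intro integral_eq_nn_integral) (auto intro: measurable_compose[OF T])
  also have "(\<integral>\<^sup>+p. ?W (?T p) \<partial>?B) = (\<integral>\<^sup>+p. ?W p \<partial>rc_base d g a L M)"
    unfolding rc_base_eq_distr[OF \<open>g > 0\<close>] by (rule nn_integral_distr[OF T, symmetric]) simp
  also have "\<dots> = cluster_integral d g a L M \<beta> (\<lambda>_. True)"
  proof -
    have "(\<lambda>p. ennreal (?W p)) \<in> borel_measurable ?B"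
      by measurable
    then show ?thesis
      using \<open>\<beta> \<ge> 0\<close>
      by (simp add: nn_integral_rc_base[OF \<open>g > 0\<close>] cluster_integral_def sum_ennreal rc_weight_nonneg Pow_def)
  qed
  finally show ?thesis
    by (simp add: split_beta')
qed

lemma space_rc_base: "space (rc_base d g a L M) = Pow (ghost_edges d L M) \<times> (box d L M \<rightarrow>\<^sub>E UNIV)"
  by (simp add: rc_base_def space_pair_measure space_PiM)

lemma bond_event_in_sets:
  "{p \<in> space (rc_base d g a L M). P (fst p)}
     \<in> sets (count_space (Pow (ghost_edges d L M)) \<Otimes>\<^sub>M PiM (box d L M) (\<lambda>_. rho g a))"
proof -
  let ?B = "count_space (Pow (ghost_edges d L M)) \<Otimes>\<^sub>M PiM (box d L M) (\<lambda>_. rho g a)"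
  have "{p \<in> space (rc_base d g a L M). P (fst p)} = fst -` {\<omega> \<in> Pow (ghost_edges d L M). P \<omega>} \<inter> space ?B"
    by (auto simp: space_rc_base space_pair_measure space_PiM)
  also have "\<dots> \<in> sets ?B"
    by (rule measurable_sets[OF measurable_fst]) auto
  finally show ?thesis .
qed

lemma sum_bond_event_indicator:
  assumes "\<beta> \<ge> 0" and "C \<ge> 0"
  shows "(\<Sum>\<omega>\<in>Pow (ghost_edges d L M). ennreal (rc_weight d L M \<beta> \<omega> (\<lambda>x\<in>box d L M. \<bar>\<phi> x\<bar>) / C)
            * indicator {p \<in> space (rc_base d g a L M). P (fst p)} (\<omega>, \<lambda>x\<in>box d L M. \<bar>\<phi> x\<bar>))
       = ennreal (\<Sum>\<omega>\<in>{\<omega> \<in> Pow (ghost_edges d L M). P \<omega>}. rc_weight d L M \<beta> \<omega> (\<lambda>x\<in>box d L M. \<bar>\<phi> x\<bar>))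
           * ennreal (1 / C)"
proof -
  let ?aa = "\<lambda>x\<in>box d L M. \<bar>\<phi> x\<bar>" and ?W = "\<lambda>\<omega>. rc_weight d L M \<beta> \<omega> (\<lambda>x\<in>box d L M. \<bar>\<phi> x\<bar>)"
  have W_nonneg: "?W \<omega> \<ge> 0" for \<omega>
    using assms by (intro rc_weight_nonneg) auto
  have "(\<Sum>\<omega>\<in>Pow (ghost_edges d L M). ennreal (?W \<omega> / C)
          * indicator {p \<in> space (rc_base d g a L M). P (fst p)} (\<omega>, ?aa))
      = (\<Sum>\<omega>\<in>Pow (ghost_edges d L M). if P \<omega> then ennreal (?W \<omega> / C) else 0)"
    by (intro sum.cong) (auto simp: space_rc_base)
  also have "\<dots> = (\<Sum>\<omega>\<in>{\<omega> \<in> Pow (ghost_edges d L M). P \<omega>}. ennreal (?W \<omega> / C))"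
    by (rule sum.inter_filter[symmetric]) (simp add: finite_ghost_edges)
  also have "\<dots> = ennreal (\<Sum>\<omega>\<in>{\<omega> \<in> Pow (ghost_edges d L M). P \<omega>}. ?W \<omega>) * ennreal (1 / C)"
    using W_nonneg \<open>C \<ge> 0\<close>
    by (simp add: sum_ennreal sum_divide_distrib[symmetric] ennreal_mult[symmetric] sum_nonneg)
  finally show ?thesis .
qed

lemma measure_Psi0_bond_event:
  assumes "g > 0" and "\<beta> \<ge> 0"
  shows "measure (Psi0 d g a L M \<beta>) {p \<in> space (rc_base d g a L M). P (fst p)}
       = enn2real (cluster_integral d g a L M \<beta> P) / enn2real (cluster_integral d g a L M \<beta> (\<lambda>_. True))"
proof -
  let ?B = "count_space (Pow (ghost_edges d L M)) \<Otimes>\<^sub>M PiM (box d L M) (\<lambda>_. rho g a)"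
  let ?W = "\<lambda>p. rc_weight d L M \<beta> (fst p) (snd p)"
  let ?A = "{p \<in> space (rc_base d g a L M). P (fst p)}"
  define C where "C = enn2real (cluster_integral d g a L M \<beta> (\<lambda>_. True))"
  have C_nonneg: "C \<ge> 0"
    by (simp add: C_def)
  have sets: "sets (rc_base d g a L M) = sets ?B"
    by (simp add: rc_base_eq_distr[OF \<open>g > 0\<close>])
  note A = bond_event_in_sets[of d g a L M P]
  have [measurable]: "(\<lambda>p. ennreal (?W p / C)) \<in> borel_measurable ?B"
    by measurable
  have "emeasure (Psi0 d g a L M \<beta>) ?A = (\<integral>\<^sup>+p. ennreal (?W p / C) * indicator ?A p \<partial>rc_base d g a L M)"
    unfolding Psi0_def integral_rc_weight_eq_cluster_integral[OF assms] C_def[symmetric]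
    unfolding split_beta' by (rule emeasure_density) (simp_all add: measurable_cong_sets[OF sets refl] sets A)
  also have "\<dots> = (\<integral>\<^sup>+\<phi>. (\<Sum>\<omega>\<in>Pow (ghost_edges d L M).
      ennreal (rc_weight d L M \<beta> \<omega> (\<lambda>x\<in>box d L M. \<bar>\<phi> x\<bar>) / C)
        * indicator ?A (\<omega>, \<lambda>x\<in>box d L M. \<bar>\<phi> x\<bar>)) \<partial>PiM (box d L M) (\<lambda>_. rho g a))"
  proof -
    have "(\<lambda>p. ennreal (?W p / C) * indicator ?A p) \<in> borel_measurable ?B"
      using A by measurable
    then show ?thesis
      by (simp add: nn_integral_rc_base[OF \<open>g > 0\<close>])
  qed
  also have "\<dots> = cluster_integral d g a L M \<beta> P * ennreal (1 / C)"
    unfolding cluster_integral_def sum_bond_event_indicator[OF \<open>\<beta> \<ge> 0\<close> C_nonneg]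
    by (rule nn_integral_multc) measurable
  finally show ?thesis
    by (simp add: measure_def enn2real_mult C_def)
qed

lemma cluster_integral_mono:
  assumes "\<beta> \<ge> 0"
  shows "cluster_integral d g a L M \<beta> P \<le> cluster_integral d g a L M \<beta> (\<lambda>_. True)"
  unfolding cluster_integral_def
proof (intro nn_integral_mono ennreal_leI)
  fix \<phi> :: "(nat \<Rightarrow> int) \<Rightarrow> real"
  show "(\<Sum>\<omega>\<in>{\<omega> \<in> Pow (ghost_edges d L M). P \<omega>}. rc_weight d L M \<beta> \<omega> (\<lambda>x\<in>box d L M. \<bar>\<phi> x\<bar>))
      \<le> (\<Sum>\<omega>\<in>{\<omega> \<in> Pow (ghost_edges d L M). True}. rc_weight d L M \<beta> \<omega> (\<lambda>x\<in>box d L M. \<bar>\<phi> x\<bar>))"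
    using assms by (intro sum_mono2 rc_weight_nonneg) (auto simp: finite_ghost_edges)
qed

lemma Z_pp_eq_cluster_integral:
  assumes "g > 0"
  shows "Z_pp d g a L M \<beta> = enn2real (cluster_integral d g a L M \<beta> (\<lambda>_. True)) / 2 ^ Suc (card (box d L M))"
  unfolding Z_pp_def
proof (rule Z_phi4_box_eq_cluster_integral[OF assms])
  show "2 * (\<Sum>\<sigma>\<in>box d L M \<rightarrow>\<^sub>E {-1, 1}. phi4_weight d (box d L M) \<beta> (h_pp d L M) (\<lambda>x. \<sigma> x * aa x))
      = (\<Sum>\<omega>\<in>{\<omega> \<in> Pow (ghost_edges d L M). True}. rc_weight d L M \<beta> \<omega> aa)" for aa
    using spin_sum_pp[of d L M \<beta> aa] by (simp add: Pow_def)
qed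

lemma Z_pm_eq_cluster_integral:
  assumes "g > 0"
  shows "Z_pm d g a L M \<beta>
       = enn2real (cluster_integral d g a L M \<beta> (\<lambda>\<omega>. \<not> ghosts_connected \<omega>)) / 2 ^ Suc (card (box d L M))"
  unfolding Z_pm_def by (rule Z_phi4_box_eq_cluster_integral[OF assms spin_sum_pm])

text \<open>The degenerate cases are covered by \<open>enn2real \<infinity> = 0\<close>, \<open>x / 0 = 0\<close> and \<open>ln 0 = 0\<close>.\<close>

lemma ln_enn2real_ratio_nonneg:
  assumes "B \<le> A"
  shows "0 \<le> ln (enn2real A / enn2real B)"
proof (cases "A = \<infinity>")
  case False
  then have "enn2real B \<le> enn2real A"
    using assms by (intro enn2real_mono) (simp_all add: top.not_eq_extremum)
  show ?thesis
  proof (cases "enn2real B = 0")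
    case False
    then have "enn2real B > 0"
      using enn2real_nonneg[of B] by linarith
    with \<open>enn2real B \<le> enn2real A\<close> have "1 \<le> enn2real A / enn2real B"
      by simp
    then show ?thesis
      by simp
  qed simp
qed simp

theorem lemma5p3:
  fixes d :: nat and g a :: real
  assumes "d \<ge> 2" and "g > 0"
  shows "(\<forall>\<beta>>0. \<forall>L M. L \<ge> 1 \<longrightarrow> M \<ge> 1 \<longrightarrow>
            Z_pm d g a L M \<beta> / Z_pp d g a L M \<beta> =
            measure (Psi0 d g a L M \<beta>)
              {p \<in> space (rc_base d g a L M). \<not> ghosts_connected (fst p)})
       \<and> (\<forall>\<beta>>0. surface_tension d g a \<beta> \<ge> 0)"
proof (intro conjI allI impI)
  \<comment> \<open>The identity holds for every box.\<close>
  fix \<beta> :: real and L M :: nat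
  assume "\<beta> > 0"
  show "Z_pm d g a L M \<beta> / Z_pp d g a L M \<beta> =
      measure (Psi0 d g a L M \<beta>) {p \<in> space (rc_base d g a L M). \<not> ghosts_connected (fst p)}"
    using measure_Psi0_bond_event[OF \<open>g > 0\<close>, of \<beta> d a L M "\<lambda>\<omega>. \<not> ghosts_connected \<omega>"] \<open>\<beta> > 0\<close>
    by (simp add: Z_pp_eq_cluster_integral Z_pm_eq_cluster_integral \<open>g > 0\<close>)
next
  fix \<beta> :: real
  assume "\<beta> > 0"
  have "0 \<le> ln (Z_pp d g a L M \<beta> / Z_pm d g a L M \<beta>)" for L M
    using ln_enn2real_ratio_nonneg[OF cluster_integral_mono] \<open>\<beta> > 0\<close>
    by (simp add: Z_pp_eq_cluster_integral Z_pm_eq_cluster_integral \<open>g > 0\<close>)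
  then show "surface_tension d g a \<beta> \<ge> 0"
    unfolding surface_tension_def by (intro Liminf_bounded always_eventually allI) simp
qed

end
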